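(* Let $N\ge2$, $l\ge1$, $\sigma\in\mathfrak S_{N,l}$, and suppose the Mealy diagram $\mathcal D(\mathsf M_\sigma)$ has $M$ connected components. Then for every $k\ge1$ and every $J\in\{1,\dots,N\}^k$, the representation $P(J)\circ\psi_\sigma$ of $\mathcal O_N$ decomposes as a direct sum $P(J_1)\oplus\cdots\oplus P(J_{M'})$ of cycle representations with $M'\ge M$ summands.
   Context: $\mathcal O_N$ is the Cuntz algebra generated by $s_1,\dots,s_N$ with $s_i^*s_j=\delta_{ij}I$, $\sum_i s_is_i^*=I$; $s_J=s_{j_1}\cdots s_{j_k}$. A representation $(\mathcal H,\pi)$ is $P(J)$, $J=(j_1,\dots,j_k)$, if there is a unit cyclic vector $\Omega$ with $\pi(s_J)\Omega=\Omega$ and $\{\pi(s_{j_i}\cdots s_{j_k})\Omega\}_{i=1}^k$ orthonormal (unique up to unitary equivalence). $\mathfrak S_{N,l}$ is the set of permutations of $\{1,\dots,N\}^l$; $\psi_\sigma$ is the endomorphism with $\psi_\sigma(s_i)=u_\sigma s_i$, $u_\sigma=\sum_{K\in\{1,\dots,N\}^l}s_{\sigma(K)}s_K^*$. Convention $\{1,\dots,N\}^0=\{0\}$. Semi-Mealy machine $\mathsf M_\sigma$: states $Q=\{q_K:K\in\{1,\dots,N\}^{l-1}\}$, inputs $a_1,\dots,a_N$, outputs $b_1,\dots,b_N$; for $l=1$, $\delta(q_0,a_i)=q_0$, $\lambda(q_0,a_i)=b_{\sigma^{-1}(i)}$; for $l\ge2$, writing $\sigma^{-1}(K,i)=(y_1,\dots,y_l)$,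 $\delta(q_K,a_i)=q_{(y_2,\dots,y_l)}$, $\lambda(q_K,a_i)=b_{y_1}$. The Mealy diagram $\mathcal D(\mathsf M_\sigma)$ is the directed graph with vertex set $Q$ and, for each $q\in Q$ and $i$, an edge from $q$ to $\delta(q,a_i)$ labelled $a_i/\lambda(q,a_i)$; connected components are taken ignoring edge directions. *)

theory Defs
  imports "HOL-Analysis.Analysis"
begin

definition l2 :: "('a \<Rightarrow> complex) set" where
  "l2 = {f. (\<lambda>x. (cmod (f x))\<^sup>2) summable_on UNIV}"

definition cinner :: "('a \<Rightarrow> complex) \<Rightarrow> ('a \<Rightarrow> complex) \<Rightarrow> complex" where
  "cinner f g = (\<Sum>\<^sub>\<infinity>x. cnj (f x) * g x)"

definition l2norm :: "('a \<Rightarrow> complex) \<Rightarrow> real" where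
  "l2norm f = sqrt (\<Sum>\<^sub>\<infinity>x. (cmod (f x))\<^sup>2)"

text \<open>Bounded linear operators on l2 (values outside l2 are irrelevant).\<close>
definition is_op :: "(('a \<Rightarrow> complex) \<Rightarrow> ('a \<Rightarrow> complex)) \<Rightarrow> bool" where
  "is_op T \<longleftrightarrow> (\<forall>f\<in>l2. T f \<in> l2)
     \<and> (\<forall>f\<in>l2. \<forall>g\<in>l2. \<forall>c. T (\<lambda>x. f x + c * g x) = (\<lambda>x. T f x + c * T g x))
     \<and> (\<exists>C. \<forall>f\<in>l2. l2norm (T f) \<le> C * l2norm f)"

definition is_adjoint :: "(('a \<Rightarrow> complex) \<Rightarrow> ('a \<Rightarrow> complex)) \<Rightarrow> (('a \<Rightarrow> complex) \<Rightarrow> ('a \<Rightarrow> complex)) \<Rightarrow> bool" where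
  "is_adjoint T A \<longleftrightarrow> is_op T \<and> is_op A \<and> (\<forall>f\<in>l2. \<forall>g\<in>l2. cinner (T f) g = cinner f (A g))"

definition lclosure :: "('a \<Rightarrow> complex) set \<Rightarrow> ('a \<Rightarrow> complex) set" where
  "lclosure A = {f \<in> l2. \<forall>e>0. \<exists>g\<in>A. l2norm (\<lambda>x. f x - g x) < e}"

definition lspan :: "('a \<Rightarrow> complex) set \<Rightarrow> ('a \<Rightarrow> complex) set" where
  "lspan A = {(\<lambda>x. \<Sum>i<n. c i * v i x) | (n::nat) c v. \<forall>i<n. v i \<in> A}"

text \<open>A representation of O_N on l2('a) is given by the images S i of the generators s_i
  (i = 1..N) together with their adjoints Sa i.\<close>
definition cuntz_rep :: "nat \<Rightarrow> (nat \<Rightarrow> ('a \<Rightarrow> complex) \<Rightarrow> ('a \<Rightarrow> complex))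
    \<Rightarrow> (nat \<Rightarrow> ('a \<Rightarrow> complex) \<Rightarrow> ('a \<Rightarrow> complex)) \<Rightarrow> bool" where
  "cuntz_rep N S Sa \<longleftrightarrow>
     (\<forall>i\<in>{1..N}. is_adjoint (S i) (Sa i))
     \<and> (\<forall>i\<in>{1..N}. \<forall>j\<in>{1..N}. \<forall>f\<in>l2. Sa i (S j f) = (if i = j then f else (\<lambda>_. 0)))
     \<and> (\<forall>f\<in>l2. (\<lambda>x. \<Sum>i=1..N. S i (Sa i f) x) = f)"

definition words :: "nat \<Rightarrow> nat \<Rightarrow> nat list set" where
  "words N k = {J. length J = k \<and> set J \<subseteq> {1..N}}"

text \<open>word_op S J = S j_1 o ... o S j_k (i.e. pi(s_J)).\<close>
primrec word_op :: "(nat \<Rightarrow> 'b \<Rightarrow> 'b) \<Rightarrow> nat list \<Rightarrow> 'b \<Rightarrow> 'b" where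
  "word_op S [] = id"
| "word_op S (j # js) = S j \<circ> word_op S js"

text \<open>pi(s_J^* ) = Sa j_k o ... o Sa j_1 = word_op Sa (rev J).\<close>

text \<open>The closed cyclic subspace generated by Omega, i.e. the closure of pi(O_N) Omega,
  O_N being the closed linear span of the s_I s_L^*.\<close>
definition cyclic_space :: "nat \<Rightarrow> (nat \<Rightarrow> ('a \<Rightarrow> complex) \<Rightarrow> ('a \<Rightarrow> complex))
    \<Rightarrow> (nat \<Rightarrow> ('a \<Rightarrow> complex) \<Rightarrow> ('a \<Rightarrow> complex)) \<Rightarrow> ('a \<Rightarrow> complex) \<Rightarrow> ('a \<Rightarrow> complex) set" where
  "cyclic_space N S Sa \<Omega> =
     lclosure (lspan {word_op S I (word_op Sa (rev L) \<Omega>) | I L. set I \<subseteq> {1..N} \<and> set L \<subseteq> {1..N}})"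

text \<open>The subrepresentation on the (invariant, closed) subspace K is P(J): there is a unit
  cyclic vector Omega of K with s_J Omega = Omega and
  {s_{j_i} ... s_{j_k} Omega}_{i=1..k} orthonormal.\<close>
definition is_P :: "nat \<Rightarrow> (nat \<Rightarrow> ('a \<Rightarrow> complex) \<Rightarrow> ('a \<Rightarrow> complex))
    \<Rightarrow> (nat \<Rightarrow> ('a \<Rightarrow> complex) \<Rightarrow> ('a \<Rightarrow> complex)) \<Rightarrow> nat list \<Rightarrow> ('a \<Rightarrow> complex) set \<Rightarrow> bool" where
  "is_P N S Sa J K \<longleftrightarrow>
     (\<exists>\<Omega>\<in>K. l2norm \<Omega> = 1
        \<and> cyclic_space N S Sa \<Omega> = K
        \<and> word_op S J \<Omega> = \<Omega>
        \<and> (\<forall>i\<in>{1..length J}. \<forall>i'\<in>{1..length J}.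
              cinner (word_op S (drop (i - 1) J) \<Omega>) (word_op S (drop (i' - 1) J) \<Omega>)
                = (if i = i' then 1 else 0)))"

definition decomposes_into_cycles :: "nat \<Rightarrow> (nat \<Rightarrow> ('a \<Rightarrow> complex) \<Rightarrow> ('a \<Rightarrow> complex))
    \<Rightarrow> (nat \<Rightarrow> ('a \<Rightarrow> complex) \<Rightarrow> ('a \<Rightarrow> complex)) \<Rightarrow> nat \<Rightarrow> (nat \<Rightarrow> nat list)
    \<Rightarrow> (nat \<Rightarrow> ('a \<Rightarrow> complex) set) \<Rightarrow> bool" where
  "decomposes_into_cycles N S Sa Mn Js Ks \<longleftrightarrow>
     (\<forall>m<Mn. length (Js m) \<ge> 1 \<and> set (Js m) \<subseteq> {1..N} \<and> is_P N S Sa (Js m) (Ks m))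
     \<and> (\<forall>m<Mn. \<forall>m'<Mn. m \<noteq> m' \<longrightarrow> (\<forall>f\<in>Ks m. \<forall>g\<in>Ks m'. cinner f g = 0))
     \<and> (\<forall>f\<in>l2. \<exists>fs. (\<forall>m<Mn. fs m \<in> Ks m) \<and> f = (\<lambda>x. \<Sum>m<Mn. fs m x))"

text \<open>u_sigma = sum_K s_{sigma K} s_K^* and its adjoint; pi o psi_sigma sends s_i to u_sigma S_i.\<close>
definition u_op :: "nat \<Rightarrow> nat \<Rightarrow> (nat list \<Rightarrow> nat list) \<Rightarrow> (nat \<Rightarrow> ('a \<Rightarrow> complex) \<Rightarrow> ('a \<Rightarrow> complex))
    \<Rightarrow> (nat \<Rightarrow> ('a \<Rightarrow> complex) \<Rightarrow> ('a \<Rightarrow> complex)) \<Rightarrow> ('a \<Rightarrow> complex) \<Rightarrow> ('a \<Rightarrow> complex)" where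
  "u_op N l \<sigma> S Sa f = (\<lambda>x. \<Sum>K\<in>words N l. word_op S (\<sigma> K) (word_op Sa (rev K) f) x)"

definition u_adj :: "nat \<Rightarrow> nat \<Rightarrow> (nat list \<Rightarrow> nat list) \<Rightarrow> (nat \<Rightarrow> ('a \<Rightarrow> complex) \<Rightarrow> ('a \<Rightarrow> complex))
    \<Rightarrow> (nat \<Rightarrow> ('a \<Rightarrow> complex) \<Rightarrow> ('a \<Rightarrow> complex)) \<Rightarrow> ('a \<Rightarrow> complex) \<Rightarrow> ('a \<Rightarrow> complex)" where
  "u_adj N l \<sigma> S Sa f = (\<lambda>x. \<Sum>K\<in>words N l. word_op S K (word_op Sa (rev (\<sigma> K)) f) x)"

definition psi_S where
  "psi_S N l \<sigma> S Sa = (\<lambda>i. u_op N l \<sigma> S Sa \<circ> S i)"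

definition psi_Sa where
  "psi_Sa N l \<sigma> S Sa = (\<lambda>i. Sa i \<circ> u_adj N l \<sigma> S Sa)"

text \<open>States q_K, K in {1..N}^(l-1) (for l = 1 the single state q_0 is the empty word).\<close>
definition mealy_states :: "nat \<Rightarrow> nat \<Rightarrow> nat list set" where
  "mealy_states N l = words N (l - 1)"

definition mealy_delta :: "nat \<Rightarrow> nat \<Rightarrow> (nat list \<Rightarrow> nat list) \<Rightarrow> nat list \<Rightarrow> nat \<Rightarrow> nat list" where
  "mealy_delta N l \<sigma> K i = tl (inv_into (words N l) \<sigma> (K @ [i]))"

definition mealy_lambda :: "nat \<Rightarrow> nat \<Rightarrow> (nat list \<Rightarrow> nat list) \<Rightarrow> nat list \<Rightarrow> nat \<Rightarrow> nat" where
  "mealy_lambda N l \<sigma> K i = hd (inv_into (words N l) \<sigma> (K @ [i]))"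

definition mealy_edges :: "nat \<Rightarrow> nat \<Rightarrow> (nat list \<Rightarrow> nat list) \<Rightarrow> (nat list \<times> (nat \<times> nat) \<times> nat list) set" where
  "mealy_edges N l \<sigma> = {(K, (i, mealy_lambda N l \<sigma> K i), mealy_delta N l \<sigma> K i) | K i.
       K \<in> mealy_states N l \<and> i \<in> {1..N}}"

definition mealy_conn :: "nat \<Rightarrow> nat \<Rightarrow> (nat list \<Rightarrow> nat list) \<Rightarrow> nat list rel" where
  "mealy_conn N l \<sigma> =
     (let E = {(q, q'). \<exists>lab. (q, lab, q') \<in> mealy_edges N l \<sigma>}
      in ((E \<union> E\<inverse>)\<^sup>*) \<inter> (mealy_states N l \<times> mealy_states N l))"

definition mealy_num_components :: "nat \<Rightarrow> nat \<Rightarrow> (nat list \<Rightarrow> nat list) \<Rightarrow> nat" where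
  "mealy_num_components N l \<sigma> = card (mealy_states N l // mealy_conn N l \<sigma>)"

end

theory Submission
  imports Defs
begin

text \<open>
  Let \<open>\<Omega>\<close> be the cyclic vector of \<open>P(J)\<close> and \<open>\<Omega>_c = s_(j_(c+1)) \<cdots> s_(j_k) \<Omega>\<close>. The vectors
  \<open>s_W \<Omega>_c\<close> form an orthonormal family with dense span, and each of them is \<open>s\<^sub>i b'\<close>
  for a unique letter \<open>i\<close> and family member \<open>b'\<close>. On this family \<open>u\<^sub>\<sigma>\<close> replaces the first
  \<open>l\<close> letters \<open>K\<close> by \<open>\<sigma> K\<close>, so every member is also \<open>\<psi>\<^sub>\<sigma>(s\<^sub>i) b'\<close> for a unique \<open>i\<close> and
  member \<open>b'\<close>, and \<open>b \<mapsto> b'\<close> deletes one of the first \<open>l\<close> letters of \<open>b\<close>. Hence every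
  orbit of \<open>b \<mapsto> b'\<close> falls into the finite set of words shorter than \<open>l\<close> and ends in a cycle.
  Grouping the family by the cycle its orbit joins gives finitely many classes; each one spans
  a copy of \<open>P(J')\<close>, with \<open>J'\<close> read off the cycle, and these copies are orthogonal and span
  \<open>l2\<close>. Finally, the first \<open>l - 1\<close> letters of a member are a state of \<open>M\<^sub>\<sigma>\<close>, the step
  \<open>b \<mapsto> b'\<close> follows an edge of the Mealy diagram, and every state occurs; so there are at least
  as many classes as connected components.
\<close>

section \<open>The Hilbert space \<open>l2\<close>\<close>

definition l2_sqnorm :: "('a \<Rightarrow> complex) \<Rightarrow> real" where
  "l2_sqnorm f = (\<Sum>\<^sub>\<infinity>x. (cmod (f x))\<^sup>2)"

lemma mem_l2_iff: "f \<in> l2 \<longleftrightarrow> (\<lambda>x. (cmod (f x))\<^sup>2) summable_on UNIV"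
  by (simp add: l2_def)

lemma l2_sqnorm_nonneg: "l2_sqnorm f \<ge> 0"
  unfolding l2_sqnorm_def by (rule infsum_nonneg) auto

lemma l2norm_eq_sqrt: "l2norm f = sqrt (l2_sqnorm f)"
  by (simp add: l2norm_def l2_sqnorm_def)

lemma l2norm_nonneg: "l2norm f \<ge> 0"
  by (simp add: l2norm_eq_sqrt l2_sqnorm_nonneg)

lemma l2norm_less_iff:
  assumes "e > 0" shows "l2norm f < e \<longleftrightarrow> l2_sqnorm f < e\<^sup>2"
proof -
  have "l2norm f < e \<longleftrightarrow> sqrt (l2_sqnorm f) < sqrt (e\<^sup>2)"
    using assms by (simp add: l2norm_eq_sqrt)
  also have "\<dots> \<longleftrightarrow> l2_sqnorm f < e\<^sup>2" by (rule real_sqrt_less_iff)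
  finally show ?thesis .
qed

lemma l2_sqnorm_minus_commute: "l2_sqnorm (\<lambda>x. g x - f x) = l2_sqnorm (\<lambda>x. f x - g x)"
  unfolding l2_sqnorm_def by (simp add: norm_minus_commute)

lemma power2_add_le: "((x::real) + y)\<^sup>2 \<le> 2 * x\<^sup>2 + 2 * y\<^sup>2"
  using sum_squares_bound[of x y] by (simp add: power2_sum)

lemma cmod_add_mult_power2_le:
  "(cmod (a + c * b))\<^sup>2 \<le> 2 * (cmod a)\<^sup>2 + 2 * ((cmod c)\<^sup>2 * (cmod b)\<^sup>2)"
proof -
  have "(cmod (a + c * b))\<^sup>2 \<le> (cmod a + cmod c * cmod b)\<^sup>2"
    by (metis norm_ge_zero norm_mult norm_triangle_ineq power_mono)
  also have "\<dots> \<le> 2 * (cmod a)\<^sup>2 + 2 * (cmod c * cmod b)\<^sup>2"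
    by (rule power2_add_le)
  finally show ?thesis by (simp add: power_mult_distrib)
qed

lemma l2_lincomb:
  assumes "f \<in> l2" "g \<in> l2" shows "(\<lambda>x. f x + c * g x) \<in> l2"
proof -
  have "(\<lambda>x. 2 * (cmod (f x))\<^sup>2 + 2 * ((cmod c)\<^sup>2 * (cmod (g x))\<^sup>2)) summable_on UNIV"
    using assms unfolding mem_l2_iff by (intro summable_on_add summable_on_cmult_right) auto
  thus ?thesis unfolding mem_l2_iff
    by (rule summable_on_comparison_test) (auto intro: cmod_add_mult_power2_le)
qed

lemma l2_zero [simp]: "(\<lambda>_. 0) \<in> l2"
  by (simp add: mem_l2_iff)

lemma l2_add: "f \<in> l2 \<Longrightarrow> g \<in> l2 \<Longrightarrow> (\<lambda>x. f x + g x) \<in> l2"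
  using l2_lincomb[of f g 1] by simp

lemma l2_scale: "g \<in> l2 \<Longrightarrow> (\<lambda>x. c * g x) \<in> l2"
  using l2_lincomb[of "\<lambda>_. 0" g c] by simp

lemma l2_diff: "f \<in> l2 \<Longrightarrow> g \<in> l2 \<Longrightarrow> (\<lambda>x. f x - g x) \<in> l2"
  using l2_lincomb[of f g "-1"] by simp

lemma l2_sum: "finite I \<Longrightarrow> (\<And>i. i \<in> I \<Longrightarrow> g i \<in> l2) \<Longrightarrow> (\<lambda>x. \<Sum>i\<in>I. g i x) \<in> l2"
  by (induction I rule: finite_induct) (auto intro: l2_add)

lemma cinner_summable:
  assumes "f \<in> l2" "g \<in> l2" shows "(\<lambda>x. cnj (f x) * g x) summable_on UNIV"
proof -
  have "(\<lambda>x. norm (cnj (f x) * g x)) summable_on UNIV"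
  proof (rule summable_on_comparison_test)
    show "(\<lambda>x. (cmod (f x))\<^sup>2 + (cmod (g x))\<^sup>2) summable_on UNIV"
      using assms by (simp add: mem_l2_iff summable_on_add)
    show "norm (cnj (f x) * g x) \<le> (cmod (f x))\<^sup>2 + (cmod (g x))\<^sup>2" for x
    proof -
      have "cmod (f x) * cmod (g x) \<le> (cmod (f x))\<^sup>2 + (cmod (g x))\<^sup>2"
        using sum_squares_bound[of "cmod (f x)" "cmod (g x)"]
          mult_nonneg_nonneg[OF norm_ge_zero norm_ge_zero, of "f x" "g x"] by linarith
      thus ?thesis by (simp add: norm_mult)
    qed
  qed simp
  thus ?thesis by (simp add: summable_on_iff_abs_summable_on_complex)
qed

lemma cinner_commute: "cinner g f = cnj (cinner f g)"
  unfolding cinner_def infsum_cnj[symmetric] by (simp add: mult.commute)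

lemma cinner_add_right:
  assumes "f \<in> l2" "g \<in> l2" "h \<in> l2"
  shows "cinner f (\<lambda>x. g x + h x) = cinner f g + cinner f h"
  unfolding cinner_def using cinner_summable[OF assms(1,2)] cinner_summable[OF assms(1,3)]
  by (simp add: distrib_left infsum_add)

lemma cinner_scale_right: "cinner f (\<lambda>x. c * g x) = c * cinner f g"
  unfolding cinner_def by (simp add: infsum_cmult_right' mult.left_commute)

lemma cinner_scale_left: "cinner (\<lambda>x. c * g x) f = cnj c * cinner g f"
  unfolding cinner_commute[of "\<lambda>x. c * g x" f] cinner_commute[of g f]
  by (simp add: cinner_scale_right)

lemma cinner_zero_right [simp]: "cinner f (\<lambda>_. 0) = 0"
  by (simp add: cinner_def)

lemma cinner_zero_left [simp]: "cinner (\<lambda>_. 0) f = 0"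
  by (simp add: cinner_def)

lemma cinner_sum_right:
  assumes "finite I" "f \<in> l2" "\<And>i. i \<in> I \<Longrightarrow> g i \<in> l2"
  shows "cinner f (\<lambda>x. \<Sum>i\<in>I. g i x) = (\<Sum>i\<in>I. cinner f (g i))"
  using assms(1,3)
proof (induction I rule: finite_induct)
  case (insert a I)
  then have "cinner f (\<lambda>x. g a x + (\<Sum>i\<in>I. g i x)) = cinner f (g a) + cinner f (\<lambda>x. \<Sum>i\<in>I. g i x)"
    using assms(2) by (intro cinner_add_right l2_sum) auto
  with insert show ?case by simp
qed simp

lemma cinner_sum_left:
  assumes "finite I" "f \<in> l2" "\<And>i. i \<in> I \<Longrightarrow> g i \<in> l2"
  shows "cinner (\<lambda>x. \<Sum>i\<in>I. g i x) f = (\<Sum>i\<in>I. cinner (g i) f)"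
proof -
  have "cinner (\<lambda>x. \<Sum>i\<in>I. g i x) f = cnj (cinner f (\<lambda>x. \<Sum>i\<in>I. g i x))"
    by (rule cinner_commute)
  also have "\<dots> = (\<Sum>i\<in>I. cnj (cinner f (g i)))"
    using cinner_sum_right[OF assms] by simp
  also have "\<dots> = (\<Sum>i\<in>I. cinner (g i) f)"
    by (intro sum.cong refl) (rule cinner_commute[symmetric])
  finally show ?thesis .
qed

lemma cinner_self: "cinner f f = complex_of_real (l2_sqnorm f)"
proof -
  have "cnj z * z = complex_of_real ((cmod z)\<^sup>2)" for z
    by (metis complex_norm_square mult.commute)
  then have "cinner f f = (\<Sum>\<^sub>\<infinity>x. complex_of_real ((cmod (f x))\<^sup>2))"
    unfolding cinner_def by presburger
  also have "\<dots> = complex_of_real (l2_sqnorm f)"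
  proof (cases "f \<in> l2")
    case True
    then show ?thesis unfolding l2_sqnorm_def mem_l2_iff
      by (metis has_sum_infsum has_sum_of_real infsumI)
  next
    case False
    then have "\<not> (\<lambda>x. complex_of_real ((cmod (f x))\<^sup>2)) summable_on UNIV"
      using summable_on_Re[of "\<lambda>x. complex_of_real ((cmod (f x))\<^sup>2)"] by (auto simp: mem_l2_iff)
    then show ?thesis using False unfolding l2_sqnorm_def mem_l2_iff by (simp add: infsum_not_exists)
  qed
  finally show ?thesis .
qed

lemma l2_sqnorm_eq_0_imp_zero:
  assumes "f \<in> l2" "l2_sqnorm f = 0" shows "f = (\<lambda>_. 0)"
proof
  fix x
  have "(cmod (f x))\<^sup>2 = 0"
    using assms unfolding l2_sqnorm_def mem_l2_iff
    by (intro nonneg_infsum_le_0D[where A = UNIV]) auto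
  thus "f x = 0" by simp
qed

lemma finite_sum_le_l2_sqnorm:
  assumes "f \<in> l2" "finite X" shows "(\<Sum>x\<in>X. (cmod (f x))\<^sup>2) \<le> l2_sqnorm f"
  using assms unfolding l2_sqnorm_def mem_l2_iff by (intro finite_sum_le_infsum) auto

lemma power2_le_l2_sqnorm: "f \<in> l2 \<Longrightarrow> (cmod (f x))\<^sup>2 \<le> l2_sqnorm f"
  using finite_sum_le_l2_sqnorm[of f "{x}"] by simp

lemma l2_sqnorm_le_if_finite_sums_le:
  assumes "\<And>X. finite X \<Longrightarrow> (\<Sum>x\<in>X. (cmod (f x))\<^sup>2) \<le> C"
  shows "f \<in> l2" and "l2_sqnorm f \<le> C"
proof -
  have "(\<lambda>x. (cmod (f x))\<^sup>2) summable_on UNIV"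
    using assms by (intro nonneg_bdd_above_summable_on bdd_aboveI2) auto
  thus "f \<in> l2" "l2_sqnorm f \<le> C"
    unfolding l2_sqnorm_def mem_l2_iff using assms by (auto intro: infsum_le_finite_sums)
qed

lemma l2_sqnorm_add_le:
  assumes "f \<in> l2" "g \<in> l2"
  shows "l2_sqnorm (\<lambda>x. f x + g x) \<le> 2 * l2_sqnorm f + 2 * l2_sqnorm g"
proof -
  have "l2_sqnorm (\<lambda>x. f x + g x) \<le> (\<Sum>\<^sub>\<infinity>x. 2 * (cmod (f x))\<^sup>2 + 2 * (cmod (g x))\<^sup>2)"
    unfolding l2_sqnorm_def using l2_add[OF assms] assms
    by (intro infsum_mono) (auto simp: mem_l2_iff intro!: summable_on_add summable_on_cmult_right
        intro: cmod_add_mult_power2_le[where c = 1, simplified])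
  also have "\<dots> = 2 * l2_sqnorm f + 2 * l2_sqnorm g"
    using assms unfolding l2_sqnorm_def mem_l2_iff
    by (simp add: infsum_add infsum_cmult_right summable_on_cmult_right)
  finally show ?thesis .
qed

lemma infsum_lincomb:
  fixes F G :: "'a \<Rightarrow> real"
  assumes "F summable_on A" "G summable_on A"
  shows "(\<Sum>\<^sub>\<infinity>x\<in>A. p * F x + q * G x) = p * infsum F A + q * infsum G A"
  using assms by (simp add: infsum_add summable_on_cmult_right infsum_cmult_right')

lemma mult_le_weighted_squares:
  fixes a b u v :: real
  assumes "a > 0" "b > 0"
  shows "u * v \<le> b / (2 * a) * u\<^sup>2 + a / (2 * b) * v\<^sup>2"
proof -
  have "b / (2 * a) * u\<^sup>2 + a / (2 * b) * v\<^sup>2 - u * v = (b * u - a * v)\<^sup>2 / (2 * a * b)"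
    using assms by (simp add: field_simps power2_eq_square)
  also have "\<dots> \<ge> 0" using assms by simp
  finally show ?thesis by simp
qed

lemma cinner_cauchy_schwarz:
  assumes "f \<in> l2" "g \<in> l2"
  shows "cmod (cinner f g) \<le> l2norm f * l2norm g"
proof (cases "l2_sqnorm f = 0 \<or> l2_sqnorm g = 0")
  case True
  then show ?thesis using l2_sqnorm_eq_0_imp_zero[OF assms(1)] l2_sqnorm_eq_0_imp_zero[OF assms(2)]
    by (auto simp: l2norm_eq_sqrt)
next
  case False
  define a where "a = l2norm f"
  define b where "b = l2norm g"
  have a2: "a\<^sup>2 = l2_sqnorm f" and b2: "b\<^sup>2 = l2_sqnorm g"
    unfolding a_def b_def l2norm_eq_sqrt by (simp_all add: l2_sqnorm_nonneg)
  have "a > 0" "b > 0"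
    using False l2_sqnorm_nonneg[of f] l2_sqnorm_nonneg[of g] unfolding a_def b_def l2norm_eq_sqrt by auto
  have abs: "(\<lambda>x. norm (cnj (f x) * g x)) summable_on UNIV"
    using cinner_summable[OF assms] by (simp add: summable_on_iff_abs_summable_on_complex)
  have "cmod (cinner f g) \<le> (\<Sum>\<^sub>\<infinity>x. norm (cnj (f x) * g x))"
    unfolding cinner_def using abs by (rule norm_infsum_bound)
  also have "\<dots> \<le> (\<Sum>\<^sub>\<infinity>x. b / (2 * a) * (cmod (f x))\<^sup>2 + a / (2 * b) * (cmod (g x))\<^sup>2)"
  proof (rule infsum_mono[OF abs])
    show "(\<lambda>x. b / (2 * a) * (cmod (f x))\<^sup>2 + a / (2 * b) * (cmod (g x))\<^sup>2) summable_on UNIV"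
      using assms unfolding mem_l2_iff by (intro summable_on_add summable_on_cmult_right)
    show "norm (cnj (f x) * g x) \<le> b / (2 * a) * (cmod (f x))\<^sup>2 + a / (2 * b) * (cmod (g x))\<^sup>2" for x
      using mult_le_weighted_squares[OF \<open>a > 0\<close> \<open>b > 0\<close>] by (simp add: norm_mult)
  qed
  also have "\<dots> = b / (2 * a) * a\<^sup>2 + a / (2 * b) * b\<^sup>2"
    using assms unfolding a2 b2 l2_sqnorm_def mem_l2_iff by (rule infsum_lincomb)
  also have "\<dots> = a * b"
    using \<open>a > 0\<close> \<open>b > 0\<close> by (simp add: power2_eq_square)
  finally show ?thesis unfolding a_def b_def .
qed

section \<open>Linear spans and their closures\<close>

lemma mem_lspan_iff:
  "f \<in> lspan A \<longleftrightarrow> (\<exists>(n::nat) c v. f = (\<lambda>x. \<Sum>i<n. c i * v i x) \<and> (\<forall>i<n. v i \<in> A))"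
  unfolding lspan_def by auto

lemma lspan_subset_l2: "A \<subseteq> l2 \<Longrightarrow> lspan A \<subseteq> l2"
  unfolding lspan_def by (auto intro!: l2_sum l2_scale)

lemma lspan_mono: "A \<subseteq> A' \<Longrightarrow> lspan A \<subseteq> lspan A'"
  unfolding lspan_def by blast

lemma lspan_zero: "(\<lambda>_. 0) \<in> lspan A"
  unfolding mem_lspan_iff by (rule exI[of _ 0]) auto

lemma lspan_base: "a \<in> A \<Longrightarrow> a \<in> lspan A"
  unfolding mem_lspan_iff by (intro exI[of _ 1] exI[of _ "\<lambda>_. 1"] exI[of _ "\<lambda>_. a"]) auto

lemma lspan_add:
  assumes "f \<in> lspan A" "g \<in> lspan A" shows "(\<lambda>x. f x + g x) \<in> lspan A"
proof -
  obtain n :: nat and c v where f: "f = (\<lambda>x. \<Sum>i<n. c i * v i x)" "\<forall>i<n. v i \<in> A"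
    using assms(1) unfolding mem_lspan_iff by blast
  obtain n' :: nat and c' v' where g: "g = (\<lambda>x. \<Sum>i<n'. c' i * v' i x)" "\<forall>i<n'. v' i \<in> A"
    using assms(2) unfolding mem_lspan_iff by blast
  define C where "C i = (if i < n then c i else c' (i - n))" for i
  define V where "V i = (if i < n then v i else v' (i - n))" for i
  have "f x + g x = (\<Sum>i<n + n'. C i * V i x)" for x
  proof -
    have "(\<Sum>i<n + n'. C i * V i x) = (\<Sum>i<n. C i * V i x) + (\<Sum>i\<in>{n..<n+n'}. C i * V i x)"
      by (simp add: lessThan_atLeast0 sum.atLeastLessThan_concat)
    also have "(\<Sum>i\<in>{n..<n+n'}. C i * V i x) = (\<Sum>i<n'. C (i + n) * V (i + n) x)"
      using sum.shift_bounds_nat_ivl[of "\<lambda>i. C i * V i x" 0 n n']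
      by (simp add: lessThan_atLeast0 add.commute)
    finally show ?thesis unfolding f g C_def V_def by simp
  qed
  moreover have "\<forall>i<n + n'. V i \<in> A" using f g unfolding V_def by auto
  ultimately show ?thesis unfolding mem_lspan_iff by blast
qed

lemma lspan_scale:
  assumes "f \<in> lspan A" shows "(\<lambda>x. c * f x) \<in> lspan A"
proof -
  obtain n :: nat and d v where f: "f = (\<lambda>x. \<Sum>i<n. d i * v i x)" "\<forall>i<n. v i \<in> A"
    using assms unfolding mem_lspan_iff by blast
  have "(\<lambda>x. c * f x) = (\<lambda>x. \<Sum>i<n. (c * d i) * v i x)"
    unfolding f by (simp add: sum_distrib_left mult.assoc)
  with f(2) show ?thesis unfolding mem_lspan_iff
    by (intro exI[of _ n] exI[of _ "\<lambda>i. c * d i"] exI[of _ v]) simp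
qed

lemma lspan_diff: "f \<in> lspan A \<Longrightarrow> g \<in> lspan A \<Longrightarrow> (\<lambda>x. f x - g x) \<in> lspan A"
  using lspan_add[OF _ lspan_scale, of f A g "-1"] by simp

lemma lspan_sum:
  assumes "finite I" "\<And>i. i \<in> I \<Longrightarrow> v i \<in> lspan A"
  shows "(\<lambda>x. \<Sum>i\<in>I. c i * v i x) \<in> lspan A"
  using assms
  by (induction I rule: finite_induct) (auto simp: lspan_zero intro!: lspan_add lspan_scale)

lemma lspan_insert_zero: "lspan (insert (\<lambda>_. 0) A) = lspan A"
proof
  show "lspan (insert (\<lambda>_. 0) A) \<subseteq> lspan A"
  proof
    fix f assume "f \<in> lspan (insert (\<lambda>_. 0) A)"
    then obtain n :: nat and c v where "f = (\<lambda>x. \<Sum>i<n. c i * v i x)" "\<forall>i<n. v i \<in> insert (\<lambda>_. 0) A"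
      unfolding mem_lspan_iff by blast
    then show "f \<in> lspan A" by (auto intro!: lspan_sum intro: lspan_base simp: lspan_zero)
  qed
  show "lspan A \<subseteq> lspan (insert (\<lambda>_. 0) A)" by (rule lspan_mono) auto
qed

lemma lspan_eq_if_between: "A \<subseteq> G \<Longrightarrow> G \<subseteq> insert (\<lambda>_. 0) A \<Longrightarrow> lspan G = lspan A"
  using lspan_mono lspan_insert_zero by (metis subset_antisym)

lemma lspan_orthogonal:
  assumes "A \<subseteq> l2" "A' \<subseteq> l2" "\<And>a b. a \<in> A \<Longrightarrow> b \<in> A' \<Longrightarrow> cinner a b = 0"
    and "f \<in> lspan A" "g \<in> lspan A'"
  shows "cinner f g = 0"
proof -
  obtain n :: nat and c v where f: "f = (\<lambda>x. \<Sum>i<n. c i * v i x)" "\<forall>i<n. v i \<in> A"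
    using assms(4) unfolding mem_lspan_iff by blast
  obtain n' :: nat and c' v' where g: "g = (\<lambda>x. \<Sum>j<n'. c' j * v' j x)" "\<forall>j<n'. v' j \<in> A'"
    using assms(5) unfolding mem_lspan_iff by blast
  have v_l2: "v i \<in> l2" if "i < n" for i using that f(2) assms(1) by auto
  have v'_l2: "v' j \<in> l2" if "j < n'" for j using that g(2) assms(2) by auto
  have g_l2: "g \<in> l2" using lspan_subset_l2[OF assms(2)] assms(5) by blast
  have "cinner (v i) g = 0" if "i < n" for i
  proof -
    have "cinner (v i) g = (\<Sum>j<n'. c' j * cinner (v i) (v' j))"
      unfolding g(1) using that v_l2 v'_l2
      by (subst cinner_sum_right) (auto intro: l2_scale simp: cinner_scale_right)
    also have "\<dots> = 0" using that f(2) g(2) assms(3) by simp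
    finally show ?thesis .
  qed
  then have "(\<Sum>i<n. cnj (c i) * cinner (v i) g) = 0" by simp
  moreover have "cinner f g = (\<Sum>i<n. cnj (c i) * cinner (v i) g)"
    unfolding f(1) using v_l2 g_l2
    by (subst cinner_sum_left) (auto intro: l2_scale simp: cinner_scale_left)
  ultimately show ?thesis by simp
qed

lemma lspan_UN_split:
  fixes M :: nat
  assumes "g \<in> lspan (\<Union>m<M. A m)"
  obtains gs where "\<And>m. m < M \<Longrightarrow> gs m \<in> lspan (A m)" "g = (\<lambda>x. \<Sum>m<M. gs m x)"
proof -
  obtain n :: nat and c v where g: "g = (\<lambda>x. \<Sum>i<n. c i * v i x)" "\<forall>i<n. v i \<in> (\<Union>m<M. A m)"
    using assms unfolding mem_lspan_iff by blast
  then obtain idx where idx: "\<And>i. i < n \<Longrightarrow> idx i < M \<and> v i \<in> A (idx i)"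
    by (metis UN_iff lessThan_iff)
  define gs where "gs m = (\<lambda>x. \<Sum>i\<in>{i\<in>{..<n}. idx i = m}. c i * v i x)" for m
  have "gs m \<in> lspan (A m)" if "m < M" for m
    unfolding gs_def by (rule lspan_sum) (auto intro: lspan_base dest: idx)
  moreover have "g x = (\<Sum>m<M. gs m x)" for x
  proof -
    have "idx ` {..<n} \<subseteq> {..<M}" using idx by auto
    then show ?thesis unfolding g gs_def by (intro sum.group[symmetric]) auto
  qed
  ultimately show ?thesis using that by blast
qed

lemma lclosure_subset_l2: "lclosure A \<subseteq> l2"
  unfolding lclosure_def by auto

lemma lclosure_base: "g \<in> l2 \<Longrightarrow> g \<in> A \<Longrightarrow> g \<in> lclosure A"
  unfolding lclosure_def by (auto intro!: bexI[of _ g] simp: l2norm_def)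

lemma lclosure_mono: "A \<subseteq> A' \<Longrightarrow> lclosure A \<subseteq> lclosure A'"
  unfolding lclosure_def by blast

lemma cinner_lclosure_eq_0:
  assumes "f \<in> l2" "D \<subseteq> l2" "g \<in> lclosure D" "\<And>d. d \<in> D \<Longrightarrow> cinner f d = 0"
  shows "cinner f g = 0"
proof -
  have "cmod (cinner f g) \<le> 0 + e" if "e > 0" for e
  proof -
    have "e / (l2norm f + 1) > 0" using that l2norm_nonneg[of f] by simp
    then obtain d where d: "d \<in> D" "l2norm (\<lambda>x. g x - d x) < e / (l2norm f + 1)"
      using assms(3) unfolding lclosure_def by blast
    have "g \<in> l2" "d \<in> l2" using assms(2,3) d(1) lclosure_subset_l2 by auto
    have "cinner f g = cinner f (\<lambda>x. d x + (g x - d x))" by simp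
    also have "\<dots> = cinner f (\<lambda>x. g x - d x)"
      using cinner_add_right[OF assms(1) \<open>d \<in> l2\<close> l2_diff[OF \<open>g \<in> l2\<close> \<open>d \<in> l2\<close>]]
        assms(4)[OF d(1)] by simp
    finally have "cmod (cinner f g) \<le> l2norm f * l2norm (\<lambda>x. g x - d x)"
      using cinner_cauchy_schwarz[OF assms(1) l2_diff[OF \<open>g \<in> l2\<close> \<open>d \<in> l2\<close>]] by simp
    also have "\<dots> \<le> l2norm f * (e / (l2norm f + 1))"
      using d(2) by (intro mult_left_mono) (auto simp: l2norm_nonneg)
    also have "\<dots> \<le> e"
      using that l2norm_nonneg[of f] by (simp add: field_simps)
    finally show ?thesis by simp
  qed
  then show ?thesis using field_le_epsilon[of "cmod (cinner f g)" 0] by simp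
qed

lemma lclosure_lspan_orthogonal:
  assumes "A \<subseteq> l2" "A' \<subseteq> l2" "\<And>a b. a \<in> A \<Longrightarrow> b \<in> A' \<Longrightarrow> cinner a b = 0"
    and "f \<in> lclosure (lspan A)" "g \<in> lclosure (lspan A')"
  shows "cinner f g = 0"
proof -
  have a_g: "cinner a g = 0" if "a \<in> lspan A" for a
  proof (rule cinner_lclosure_eq_0[OF _ lspan_subset_l2[OF assms(2)] assms(5)])
    show "a \<in> l2" using that lspan_subset_l2[OF assms(1)] by blast
    show "cinner a d = 0" if "d \<in> lspan A'" for d
      using lspan_orthogonal[OF assms(1-3) \<open>a \<in> lspan A\<close> that] .
  qed
  have "cinner g f = 0"
  proof (rule cinner_lclosure_eq_0[OF _ lspan_subset_l2[OF assms(1)] assms(4)])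
    show "g \<in> l2" using assms(5) lclosure_subset_l2 by blast
    show "cinner g a = 0" if "a \<in> lspan A" for a
      using a_g[OF that] cinner_commute[of g a] by simp
  qed
  then show ?thesis using cinner_commute[of f g] by simp
qed

lemma l2_sqnorm_sum_orthogonal:
  assumes "finite I" "\<And>i. i \<in> I \<Longrightarrow> h i \<in> l2"
    and "\<And>i j. i \<in> I \<Longrightarrow> j \<in> I \<Longrightarrow> i \<noteq> j \<Longrightarrow> cinner (h i) (h j) = 0"
  shows "l2_sqnorm (\<lambda>x. \<Sum>i\<in>I. h i x) = (\<Sum>i\<in>I. l2_sqnorm (h i))"
proof -
  have "complex_of_real (l2_sqnorm (\<lambda>x. \<Sum>i\<in>I. h i x))
      = (\<Sum>i\<in>I. \<Sum>j\<in>I. cinner (h i) (h j))"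
    using assms(1,2) by (simp add: cinner_self[symmetric] cinner_sum_left cinner_sum_right l2_sum)
  also have "\<dots> = (\<Sum>i\<in>I. \<Sum>j\<in>I. if i = j then cinner (h i) (h i) else 0)"
    using assms(3) by (intro sum.cong refl) auto
  also have "\<dots> = (\<Sum>i\<in>I. cinner (h i) (h i))"
    using assms(1) by simp
  also have "\<dots> = complex_of_real (\<Sum>i\<in>I. l2_sqnorm (h i))"
    by (simp add: cinner_self)
  finally show ?thesis using of_real_eq_iff by blast
qed

lemma Cauchy_pointwise_if_l2_Cauchy:
  assumes G: "\<And>n. G n \<in> l2"
    and cauchy: "\<And>N n p. N \<le> n \<Longrightarrow> N \<le> p \<Longrightarrow> l2_sqnorm (\<lambda>x. G n x - G p x) \<le> \<delta> N"
    and "\<delta> \<longlonglongrightarrow> 0"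
  shows "Cauchy (\<lambda>n. G n x)"
proof (rule metric_CauchyI)
  fix e :: real assume "e > 0"
  then obtain N where "\<forall>n\<ge>N. norm (\<delta> n - 0) < e\<^sup>2"
    using LIMSEQ_D[OF \<open>\<delta> \<longlonglongrightarrow> 0\<close>, of "e\<^sup>2"] by auto
  then have N: "\<delta> N < e\<^sup>2" by auto
  have "dist (G n x) (G p x) < e" if "N \<le> n" "N \<le> p" for n p
  proof -
    have "(cmod (G n x - G p x))\<^sup>2 \<le> l2_sqnorm (\<lambda>x. G n x - G p x)"
      using G by (intro power2_le_l2_sqnorm l2_diff)
    also have "\<dots> < e\<^sup>2" using cauchy[OF that] N by linarith
    finally have "cmod (G n x - G p x) < e"
      by (rule power2_less_imp_less) (use \<open>e > 0\<close> in simp)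
    then show ?thesis by (simp add: dist_norm)
  qed
  then show "\<exists>N. \<forall>n\<ge>N. \<forall>p\<ge>N. dist (G n x) (G p x) < e" by blast
qed

lemma l2_complete:
  assumes G: "\<And>n. G n \<in> l2"
    and cauchy: "\<And>N n p. N \<le> n \<Longrightarrow> N \<le> p \<Longrightarrow> l2_sqnorm (\<lambda>x. G n x - G p x) \<le> \<delta> N"
    and "\<delta> \<longlonglongrightarrow> 0"
  shows "\<exists>g\<in>l2. (\<forall>x. (\<lambda>n. G n x) \<longlonglongrightarrow> g x) \<and> (\<forall>n. l2_sqnorm (\<lambda>x. g x - G n x) \<le> \<delta> n)"
proof -
  have "Cauchy (\<lambda>n. G n x)" for x
    using G cauchy \<open>\<delta> \<longlonglongrightarrow> 0\<close> by (rule Cauchy_pointwise_if_l2_Cauchy)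
  then have lim: "(\<lambda>n. G n x) \<longlonglongrightarrow> lim (\<lambda>n. G n x)" for x
    by (simp add: Cauchy_convergent_iff convergent_LIMSEQ_iff)
  define g where "g x = lim (\<lambda>n. G n x)" for x
  have bound: "(\<lambda>x. g x - G n x) \<in> l2 \<and> l2_sqnorm (\<lambda>x. g x - G n x) \<le> \<delta> n" for n
  proof -
    have "(\<Sum>x\<in>X. (cmod (g x - G n x))\<^sup>2) \<le> \<delta> n" if "finite X" for X
    proof (rule LIMSEQ_le_const2)
      show "(\<lambda>p. \<Sum>x\<in>X. (cmod (G p x - G n x))\<^sup>2) \<longlonglongrightarrow> (\<Sum>x\<in>X. (cmod (g x - G n x))\<^sup>2)"
        unfolding g_def by (intro tendsto_intros lim)
      have "(\<Sum>x\<in>X. (cmod (G p x - G n x))\<^sup>2) \<le> \<delta> n" if "n \<le> p" for p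
        using finite_sum_le_l2_sqnorm[OF l2_diff[OF G[of p] G[of n]] \<open>finite X\<close>]
          cauchy[OF that order.refl]
        by linarith
      then show "\<exists>N. \<forall>p\<ge>N. (\<Sum>x\<in>X. (cmod (G p x - G n x))\<^sup>2) \<le> \<delta> n" by blast
    qed
    from l2_sqnorm_le_if_finite_sums_le[OF this] show ?thesis by blast
  qed
  moreover have "g \<in> l2"
    using l2_add[OF conjunct1[OF bound[of 0]] G[of 0]] by simp
  ultimately show ?thesis using lim by (intro bexI[of _ g]) (auto simp: g_def)
qed

lemma mem_lclosureI:
  assumes "g \<in> l2" "\<And>n. G n \<in> A" "\<And>n. l2_sqnorm (\<lambda>x. g x - G n x) \<le> \<delta> n" "\<delta> \<longlonglongrightarrow> 0"
  shows "g \<in> lclosure A"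
  unfolding lclosure_def
proof (intro CollectI conjI allI impI \<open>g \<in> l2\<close>)
  fix e :: real assume "e > 0"
  then obtain n where "\<forall>m\<ge>n. norm (\<delta> m - 0) < e\<^sup>2"
    using LIMSEQ_D[OF assms(4), of "e\<^sup>2"] by auto
  then have "\<delta> n < e\<^sup>2" by auto
  then have "l2norm (\<lambda>x. g x - G n x) < e"
    using assms(3)[of n] \<open>e > 0\<close> by (simp add: l2norm_less_iff)
  then show "\<exists>g'\<in>A. l2norm (\<lambda>x. g x - g' x) < e" using assms(2) by blast
qed

lemma tendsto_if_l2_sqnorm_le:
  assumes "\<And>n. (\<lambda>x. f x - G n x) \<in> l2" "\<And>n. l2_sqnorm (\<lambda>x. f x - G n x) \<le> \<delta> n" "\<delta> \<longlonglongrightarrow> 0"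
  shows "(\<lambda>n. G n x) \<longlonglongrightarrow> f x"
proof (rule LIM_zero_cancel, rule Lim_null_comparison)
  have "(cmod (G n x - f x))\<^sup>2 \<le> \<delta> n" for n
  proof -
    have "(cmod (f x - G n x))\<^sup>2 \<le> l2_sqnorm (\<lambda>x. f x - G n x)"
      by (rule power2_le_l2_sqnorm[OF assms(1)])
    then show ?thesis using assms(2)[of n] norm_minus_commute[of "G n x" "f x"] by simp
  qed
  then show "\<forall>\<^sub>F n in sequentially. norm (G n x - f x) \<le> sqrt (\<delta> n)"
    by (simp add: real_le_rsqrt)
  show "(\<lambda>n. sqrt (\<delta> n)) \<longlonglongrightarrow> 0"
    using tendsto_real_sqrt[OF assms(3)] by simp
qed

lemma lclosure_lspan_UN_approx:
  fixes M :: nat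
  assumes "f \<in> lclosure (lspan (\<Union>m<M. A m))" "e > 0"
  obtains gs where "\<And>m. m < M \<Longrightarrow> gs m \<in> lspan (A m)" "l2_sqnorm (\<lambda>x. f x - (\<Sum>m<M. gs m x)) < e"
proof -
  have "sqrt e > 0" using assms(2) by simp
  then obtain g where g: "g \<in> lspan (\<Union>m<M. A m)" "l2norm (\<lambda>x. f x - g x) < sqrt e"
    using assms(1) unfolding lclosure_def by blast
  obtain gs where gs: "\<And>m. m < M \<Longrightarrow> gs m \<in> lspan (A m)" "g = (\<lambda>x. \<Sum>m<M. gs m x)"
    using lspan_UN_split[OF g(1)] by blast
  have "l2_sqnorm (\<lambda>x. f x - g x) < e"
    using g(2) \<open>sqrt e > 0\<close> assms(2) by (simp add: l2norm_less_iff)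
  from gs(1) this[unfolded gs(2)] show ?thesis by (rule that)
qed

lemma l2_sqnorm_orthogonal_component_le:
  fixes M :: nat
  assumes l2: "\<And>m. m < M \<Longrightarrow> A m \<subseteq> l2"
    and orth: "\<And>m m' a b. m < M \<Longrightarrow> m' < M \<Longrightarrow> m \<noteq> m' \<Longrightarrow> a \<in> A m \<Longrightarrow> b \<in> A m' \<Longrightarrow> cinner a b = 0"
    and g: "\<And>m. m < M \<Longrightarrow> g m \<in> lspan (A m)" and "m < M"
  shows "l2_sqnorm (g m) \<le> l2_sqnorm (\<lambda>x. \<Sum>m'<M. g m' x)"
proof -
  have g_l2: "g m' \<in> l2" if "m' < M" for m'
    using g[OF that] lspan_subset_l2[OF l2[OF that]] by blast
  have g_orth: "cinner (g i) (g j) = 0" if "i \<in> {..<M}" "j \<in> {..<M}" "i \<noteq> j" for i j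
    using that by (intro lspan_orthogonal[OF l2 l2 orth g g]) auto
  have "l2_sqnorm (g m) \<le> (\<Sum>m'<M. l2_sqnorm (g m'))"
    using \<open>m < M\<close> by (intro member_le_sum) (auto simp: l2_sqnorm_nonneg)
  also have "\<dots> = l2_sqnorm (\<lambda>x. \<Sum>m'<M. g m' x)"
    using g_l2 g_orth by (intro l2_sqnorm_sum_orthogonal[symmetric]) auto
  finally show ?thesis .
qed

lemma orthogonal_components_cauchy:
  fixes M :: nat
  assumes l2: "\<And>m. m < M \<Longrightarrow> A m \<subseteq> l2"
    and orth: "\<And>m m' a b. m < M \<Longrightarrow> m' < M \<Longrightarrow> m \<noteq> m' \<Longrightarrow> a \<in> A m \<Longrightarrow> b \<in> A m' \<Longrightarrow> cinner a b = 0"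
    and G: "\<And>n m. m < M \<Longrightarrow> G n m \<in> lspan (A m)" and "f \<in> l2"
    and approx: "\<And>n. l2_sqnorm (\<lambda>x. f x - (\<Sum>m<M. G n m x)) \<le> \<epsilon> n"
    and antimono: "\<And>n N. N \<le> n \<Longrightarrow> \<epsilon> n \<le> \<epsilon> N"
    and "m < M" "N \<le> n" "N \<le> p"
  shows "l2_sqnorm (\<lambda>x. G n m x - G p m x) \<le> 4 * \<epsilon> N"
proof -
  have G_l2: "G n m \<in> l2" if "m < M" for n m
    using G[OF that] lspan_subset_l2[OF l2[OF that]] by blast
  have "l2_sqnorm (\<lambda>x. G n m x - G p m x) \<le> l2_sqnorm (\<lambda>x. \<Sum>m'<M. G n m' x - G p m' x)"
    using l2_sqnorm_orthogonal_component_le[of M A "\<lambda>m' x. G n m' x - G p m' x" m] l2 orth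
      lspan_diff[OF G G] \<open>m < M\<close> by blast
  also have "(\<lambda>x. \<Sum>m'<M. G n m' x - G p m' x)
      = (\<lambda>x. ((\<Sum>m<M. G n m x) - f x) + (f x - (\<Sum>m<M. G p m x)))"
    by (simp add: sum_subtractf)
  also have "l2_sqnorm \<dots> \<le> 2 * l2_sqnorm (\<lambda>x. (\<Sum>m<M. G n m x) - f x)
      + 2 * l2_sqnorm (\<lambda>x. f x - (\<Sum>m<M. G p m x))"
    using \<open>f \<in> l2\<close> G_l2 by (intro l2_sqnorm_add_le l2_diff l2_sum) auto
  also have "\<dots> \<le> 4 * \<epsilon> N"
    using approx[of n] approx[of p] antimono[OF \<open>N \<le> n\<close>] antimono[OF \<open>N \<le> p\<close>]
      l2_sqnorm_minus_commute[of "\<lambda>x. \<Sum>m<M. G n m x" f] by linarith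
  finally show ?thesis .
qed

lemma lclosure_cauchy_limit:
  assumes "B \<subseteq> l2" "\<And>n. G n \<in> B"
    and "\<And>N n p. N \<le> n \<Longrightarrow> N \<le> p \<Longrightarrow> l2_sqnorm (\<lambda>x. G n x - G p x) \<le> \<delta> N" "\<delta> \<longlonglongrightarrow> 0"
  obtains g where "g \<in> lclosure B" "\<And>x. (\<lambda>n. G n x) \<longlonglongrightarrow> g x"
proof -
  have "\<exists>g\<in>l2. (\<forall>x. (\<lambda>n. G n x) \<longlonglongrightarrow> g x) \<and> (\<forall>n. l2_sqnorm (\<lambda>x. g x - G n x) \<le> \<delta> n)"
    using assms by (intro l2_complete) auto
  then obtain g where g: "g \<in> l2" "\<And>x. (\<lambda>n. G n x) \<longlonglongrightarrow> g x"
    "\<And>n. l2_sqnorm (\<lambda>x. g x - G n x) \<le> \<delta> n"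
    by blast
  have "g \<in> lclosure B" using g(1) assms(2) g(3) assms(4) by (rule mem_lclosureI)
  from this g(2) show ?thesis by (rule that)
qed

lemma lclosure_lspan_orthogonal_decomp:
  fixes A :: "nat \<Rightarrow> ('a \<Rightarrow> complex) set" and M :: nat
  assumes f: "f \<in> lclosure (lspan (\<Union>m<M. A m))"
    and l2: "\<And>m. m < M \<Longrightarrow> A m \<subseteq> l2"
    and orth: "\<And>m m' a b. m < M \<Longrightarrow> m' < M \<Longrightarrow> m \<noteq> m' \<Longrightarrow> a \<in> A m \<Longrightarrow> b \<in> A m' \<Longrightarrow> cinner a b = 0"
  obtains fs where "\<And>m. m < M \<Longrightarrow> fs m \<in> lclosure (lspan (A m))" "f = (\<lambda>x. \<Sum>m<M. fs m x)"
proof -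
  define \<epsilon> :: "nat \<Rightarrow> real" where "\<epsilon> n = inverse (real (Suc n))" for n
  have \<epsilon>_pos: "\<epsilon> n > 0" for n unfolding \<epsilon>_def by simp
  have "\<epsilon> \<longlonglongrightarrow> 0" unfolding \<epsilon>_def by (rule LIMSEQ_inverse_real_of_nat)
  then have "(\<lambda>n. 4 * \<epsilon> n) \<longlonglongrightarrow> 0"
    using tendsto_mult_right_zero by blast
  have \<epsilon>_antimono: "\<epsilon> n \<le> \<epsilon> N" if "N \<le> n" for n N
    unfolding \<epsilon>_def using that by (simp add: le_imp_inverse_le)
  have "f \<in> l2" using f lclosure_subset_l2 by blast
  have "\<exists>gs. (\<forall>m<M. gs m \<in> lspan (A m)) \<and> l2_sqnorm (\<lambda>x. f x - (\<Sum>m<M. gs m x)) < \<epsilon> n" for n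
    using lclosure_lspan_UN_approx[OF f \<epsilon>_pos] by metis
  then obtain G where G: "\<And>n m. m < M \<Longrightarrow> G n m \<in> lspan (A m)"
    and approx: "\<And>n. l2_sqnorm (\<lambda>x. f x - (\<Sum>m<M. G n m x)) < \<epsilon> n"
    by metis
  have "\<exists>g. g \<in> lclosure (lspan (A m)) \<and> (\<forall>x. (\<lambda>n. G n m x) \<longlonglongrightarrow> g x)" if m: "m < M" for m
  proof (rule lclosure_cauchy_limit)
    show "lspan (A m) \<subseteq> l2" by (rule lspan_subset_l2[OF l2[OF m]])
    show "G n m \<in> lspan (A m)" for n by (rule G[OF m])
    show "l2_sqnorm (\<lambda>x. G n m x - G p m x) \<le> 4 * \<epsilon> N" if "N \<le> n" "N \<le> p" for N n p
      using orthogonal_components_cauchy[OF l2 orth G \<open>f \<in> l2\<close> less_imp_le[OF approx] \<epsilon>_antimono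
          m that] .
  qed (use \<open>(\<lambda>n. 4 * \<epsilon> n) \<longlonglongrightarrow> 0\<close> in blast)+
  then obtain fs where fs: "\<And>m. m < M \<Longrightarrow> fs m \<in> lclosure (lspan (A m))"
    "\<And>m x. m < M \<Longrightarrow> (\<lambda>n. G n m x) \<longlonglongrightarrow> fs m x"
    by metis
  have "f x = (\<Sum>m<M. fs m x)" for x
  proof (rule LIMSEQ_unique)
    have "(\<lambda>x. f x - (\<Sum>m<M. G n m x)) \<in> l2" for n
      using \<open>f \<in> l2\<close> G lspan_subset_l2 l2 by (intro l2_diff l2_sum) blast+
    then show "(\<lambda>n. \<Sum>m<M. G n m x) \<longlonglongrightarrow> f x"
      using less_imp_le[OF approx] \<open>\<epsilon> \<longlonglongrightarrow> 0\<close> by (rule tendsto_if_l2_sqnorm_le)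
    show "(\<lambda>n. \<Sum>m<M. G n m x) \<longlonglongrightarrow> (\<Sum>m<M. fs m x)"
      by (intro tendsto_sum fs(2)) simp
  qed
  then have "f = (\<lambda>x. \<Sum>m<M. fs m x)" by (rule ext)
  with fs(1) show ?thesis by (rule that)
qed

section \<open>Cycle representations of \<open>\<O>\<^sub>N\<close>\<close>

lemma is_op_zero:
  assumes "is_op T" shows "T (\<lambda>_. 0) = (\<lambda>_. 0)"
proof -
  have "\<forall>f\<in>l2. \<forall>g\<in>l2. \<forall>c. T (\<lambda>x. f x + c * g x) = (\<lambda>x. T f x + c * T g x)"
    using assms by (simp add: is_op_def)
  from this[rule_format, OF l2_zero l2_zero, of 1]
  have "T (\<lambda>_. 0) x = T (\<lambda>_. 0) x + T (\<lambda>_. 0) x" for x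
    by (simp add: fun_eq_iff)
  then show ?thesis by auto
qed

lemma word_op_append: "word_op S (xs @ ys) = word_op S xs \<circ> word_op S ys"
  by (induction xs) auto

lemma finite_words: "finite (words N n)"
proof -
  have "words N n = {xs. set xs \<subseteq> {1..N} \<and> length xs = n}" unfolding words_def by auto
  then show ?thesis using finite_lists_length_eq[of "{1..N}" n] by simp
qed

lemma mem_words_iff: "K \<in> words N n \<longleftrightarrow> length K = n \<and> set K \<subseteq> {1..N}"
  by (simp add: words_def)

lemma words_set: "K \<in> words N n \<Longrightarrow> set K \<subseteq> {1..N}"
  by (simp add: words_def)

locale cuntz_l2 =
  fixes N :: nat and S Sa :: "nat \<Rightarrow> ('a \<Rightarrow> complex) \<Rightarrow> ('a \<Rightarrow> complex)"
  assumes rep: "cuntz_rep N S Sa"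
begin

lemma S_l2: "i \<in> {1..N} \<Longrightarrow> f \<in> l2 \<Longrightarrow> S i f \<in> l2"
  using rep unfolding cuntz_rep_def is_adjoint_def is_op_def by blast

lemma S_zero: "i \<in> {1..N} \<Longrightarrow> S i (\<lambda>_. 0) = (\<lambda>_. 0)"
  using rep is_op_zero unfolding cuntz_rep_def is_adjoint_def by blast

lemma Sa_zero: "i \<in> {1..N} \<Longrightarrow> Sa i (\<lambda>_. 0) = (\<lambda>_. 0)"
  using rep is_op_zero unfolding cuntz_rep_def is_adjoint_def by blast

lemma Sa_S: "i \<in> {1..N} \<Longrightarrow> j \<in> {1..N} \<Longrightarrow> f \<in> l2 \<Longrightarrow> Sa i (S j f) = (if i = j then f else (\<lambda>_. 0))"
  using rep unfolding cuntz_rep_def by blast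

lemma cinner_S_left: "i \<in> {1..N} \<Longrightarrow> f \<in> l2 \<Longrightarrow> g \<in> l2 \<Longrightarrow> cinner (S i f) g = cinner f (Sa i g)"
  using rep unfolding cuntz_rep_def is_adjoint_def by blast

lemma cinner_S_S:
  assumes "i \<in> {1..N}" "j \<in> {1..N}" "f \<in> l2" "g \<in> l2"
  shows "cinner (S i f) (S j g) = (if i = j then cinner f g else 0)"
  using cinner_S_left[OF assms(1,3) S_l2[OF assms(2,4)]] Sa_S[OF assms(1,2,4)] by simp

lemma word_op_S_l2: "set W \<subseteq> {1..N} \<Longrightarrow> f \<in> l2 \<Longrightarrow> word_op S W f \<in> l2"
  by (induction W) (auto intro: S_l2)

lemma cinner_word_op_S_self:
  "set W \<subseteq> {1..N} \<Longrightarrow> f \<in> l2 \<Longrightarrow> cinner (word_op S W f) (word_op S W f) = cinner f f"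
  by (induction W) (auto simp: cinner_S_S word_op_S_l2)

lemma word_op_S_zero: "set W \<subseteq> {1..N} \<Longrightarrow> word_op S W (\<lambda>_. 0) = (\<lambda>_. 0)"
  by (induction W) (auto simp: S_zero)

lemma word_op_Sa_zero: "set W \<subseteq> {1..N} \<Longrightarrow> word_op Sa W (\<lambda>_. 0) = (\<lambda>_. 0)"
  by (induction W) (auto simp: Sa_zero)

end

locale cycle_rep = cuntz_l2 +
  fixes J :: "nat list" and k :: nat and \<Omega> :: "'a \<Rightarrow> complex"
  assumes k_pos: "k \<ge> 1" and J_word: "J \<in> words N k"
    and \<Omega>_l2: "\<Omega> \<in> l2" and \<Omega>_cyclic: "cyclic_space N S Sa \<Omega> = l2"
    and \<Omega>_fixed: "word_op S J \<Omega> = \<Omega>"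
    and \<Omega>_orthonormal: "\<forall>i\<in>{1..length J}. \<forall>i'\<in>{1..length J}.
      cinner (word_op S (drop (i - 1) J) \<Omega>) (word_op S (drop (i' - 1) J) \<Omega>) = (if i = i' then 1 else 0)"
begin

lemma length_J: "length J = k" and set_J: "set J \<subseteq> {1..N}"
  using J_word by (auto simp: mem_words_iff)

lemma J_nth: "c < k \<Longrightarrow> J ! c \<in> {1..N}"
  using set_J length_J nth_mem by blast

definition cycle_vec :: "nat \<Rightarrow> 'a \<Rightarrow> complex" where
  "cycle_vec c = word_op S (drop c J) \<Omega>"

lemma cycle_vec_0: "cycle_vec 0 = \<Omega>"
  unfolding cycle_vec_def using \<Omega>_fixed by simp

lemma cycle_vec_l2: "cycle_vec c \<in> l2"
proof -
  have "set (drop c J) \<subseteq> {1..N}" using set_J set_drop_subset[of c J] by blast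
  then show ?thesis unfolding cycle_vec_def by (intro word_op_S_l2 \<Omega>_l2)
qed

lemma cycle_vec_step:
  assumes "c < k" shows "cycle_vec c = S (J ! c) (cycle_vec (Suc c mod k))"
proof -
  have drop: "drop c J = J ! c # drop (Suc c) J"
    using assms length_J by (simp add: Cons_nth_drop_Suc)
  show ?thesis
  proof (cases "Suc c < k")
    case True
    then show ?thesis unfolding cycle_vec_def drop by simp
  next
    case False
    then have "Suc c = k" using assms by simp
    then show ?thesis unfolding cycle_vec_def drop using length_J \<Omega>_fixed by simp
  qed
qed

lemma cycle_vec_orthonormal:
  assumes "c < k" "c' < k" shows "cinner (cycle_vec c) (cycle_vec c') = (if c = c' then 1 else 0)"
  using \<Omega>_orthonormal[rule_format, of "Suc c" "Suc c'"] assms length_J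
  unfolding cycle_vec_def by auto

definition basis :: "('a \<Rightarrow> complex) set" where
  "basis = {word_op S W (cycle_vec c) | W c. set W \<subseteq> {1..N} \<and> c < k}"

lemma word_op_cycle_vec_in_basis: "set W \<subseteq> {1..N} \<Longrightarrow> c < k \<Longrightarrow> word_op S W (cycle_vec c) \<in> basis"
  unfolding basis_def by blast

lemma cycle_vec_in_basis: "c < k \<Longrightarrow> cycle_vec c \<in> basis"
  using word_op_cycle_vec_in_basis[of "[]"] by simp

lemma basis_l2: "b \<in> basis \<Longrightarrow> b \<in> l2"
  unfolding basis_def using word_op_S_l2 cycle_vec_l2 by blast

lemma S_in_basis:
  assumes "i \<in> {1..N}" "b \<in> basis" shows "S i b \<in> basis"
proof -
  obtain W c where "b = word_op S W (cycle_vec c)" "set W \<subseteq> {1..N}" "c < k"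
    using assms(2) unfolding basis_def by blast
  then show ?thesis using assms(1) word_op_cycle_vec_in_basis[of "i # W" c] by simp
qed

lemma word_op_S_in_basis: "set W \<subseteq> {1..N} \<Longrightarrow> b \<in> basis \<Longrightarrow> word_op S W b \<in> basis"
  by (induction W) (auto intro: S_in_basis)

lemma basis_S_cases:
  assumes "b \<in> basis" obtains i b' where "i \<in> {1..N}" "b' \<in> basis" "b = S i b'"
proof -
  obtain W c where b: "b = word_op S W (cycle_vec c)" "set W \<subseteq> {1..N}" "c < k"
    using assms unfolding basis_def by blast
  show ?thesis
  proof (cases W)
    case Nil
    then have "b = S (J ! c) (cycle_vec (Suc c mod k))"
      using b cycle_vec_step[OF b(3)] by simp
    moreover have "cycle_vec (Suc c mod k) \<in> basis"
      using k_pos by (intro cycle_vec_in_basis) simp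
    ultimately show ?thesis using that J_nth[OF b(3)] by blast
  next
    case (Cons w W')
    then have "b = S w (word_op S W' (cycle_vec c))" "w \<in> {1..N}" using b by auto
    moreover have "word_op S W' (cycle_vec c) \<in> basis"
      using Cons b by (intro word_op_cycle_vec_in_basis) auto
    ultimately show ?thesis using that by blast
  qed
qed

lemma cinner_basis_self: "b \<in> basis \<Longrightarrow> cinner b b = 1"
  unfolding basis_def using cinner_word_op_S_self cycle_vec_l2 cycle_vec_orthonormal by auto

lemma cinner_cycle_vec_word_op_cases:
  "set W \<subseteq> {1..N} \<Longrightarrow> c < k \<Longrightarrow> c' < k \<Longrightarrow>
   cinner (cycle_vec c) (word_op S W (cycle_vec c')) = 0 \<or> cycle_vec c = word_op S W (cycle_vec c')"
proof (induction W arbitrary: c)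
  case Nil
  then show ?case using cycle_vec_orthonormal by auto
next
  case (Cons w W)
  note step = cycle_vec_step[OF Cons.prems(2)]
  have "cinner (cycle_vec c) (word_op S (w # W) (cycle_vec c'))
      = cinner (S (J ! c) (cycle_vec (Suc c mod k))) (S w (word_op S W (cycle_vec c')))"
    using step by simp
  also have "\<dots> = (if J ! c = w then cinner (cycle_vec (Suc c mod k)) (word_op S W (cycle_vec c')) else 0)"
    using Cons.prems J_nth by (intro cinner_S_S word_op_S_l2 cycle_vec_l2) auto
  finally have eq: "cinner (cycle_vec c) (word_op S (w # W) (cycle_vec c')) = \<dots>" .
  show ?case
  proof (cases "J ! c = w")
    case True
    have "Suc c mod k < k" using k_pos by simp
    then have "cinner (cycle_vec (Suc c mod k)) (word_op S W (cycle_vec c')) = 0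
        \<or> cycle_vec (Suc c mod k) = word_op S W (cycle_vec c')"
      using Cons.IH Cons.prems by simp
    then show ?thesis using eq True step by auto
  qed (use eq in simp)
qed

lemma cinner_basis_cases:
  "set W \<subseteq> {1..N} \<Longrightarrow> set W' \<subseteq> {1..N} \<Longrightarrow> c < k \<Longrightarrow> c' < k \<Longrightarrow>
   cinner (word_op S W (cycle_vec c)) (word_op S W' (cycle_vec c')) = 0
   \<or> word_op S W (cycle_vec c) = word_op S W' (cycle_vec c')"
proof (induction W arbitrary: W')
  case Nil
  then show ?case using cinner_cycle_vec_word_op_cases by simp
next
  case (Cons w V)
  show ?case
  proof (cases W')
    case Nil
    have "cinner (cycle_vec c') (word_op S (w # V) (cycle_vec c)) = 0
        \<or> cycle_vec c' = word_op S (w # V) (cycle_vec c)"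
      using Cons.prems by (intro cinner_cycle_vec_word_op_cases) auto
    then show ?thesis
      using Nil cinner_commute[of "word_op S (w # V) (cycle_vec c)" "cycle_vec c'"] by auto
  next
    case (Cons w' V')
    have "cinner (word_op S (w # V) (cycle_vec c)) (word_op S W' (cycle_vec c'))
        = (if w = w' then cinner (word_op S V (cycle_vec c)) (word_op S V' (cycle_vec c')) else 0)"
      using Cons Cons.prems by (simp add: cinner_S_S word_op_S_l2 cycle_vec_l2)
    moreover have "cinner (word_op S V (cycle_vec c)) (word_op S V' (cycle_vec c')) = 0
        \<or> word_op S V (cycle_vec c) = word_op S V' (cycle_vec c')"
      using Cons.IH Cons.prems Cons by simp
    ultimately show ?thesis using Cons by auto
  qed
qed

lemma basis_orthonormal:
  assumes "b \<in> basis" "b' \<in> basis" shows "cinner b b' = (if b = b' then 1 else 0)"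
proof (cases "b = b'")
  case True
  then show ?thesis using cinner_basis_self assms(1) by simp
next
  case False
  obtain W c W' c' where "b = word_op S W (cycle_vec c)" "set W \<subseteq> {1..N}" "c < k"
    "b' = word_op S W' (cycle_vec c')" "set W' \<subseteq> {1..N}" "c' < k"
    using assms unfolding basis_def by blast
  then have "cinner b b' = 0 \<or> b = b'" using cinner_basis_cases[of W W' c c'] by simp
  then show ?thesis using False by simp
qed

lemma basis_nonzero: "b \<in> basis \<Longrightarrow> b \<noteq> (\<lambda>_. 0)"
  using cinner_basis_self by fastforce

definition lead :: "('a \<Rightarrow> complex) \<Rightarrow> nat" where
  "lead b = (SOME i. i \<in> {1..N} \<and> (\<exists>b'\<in>basis. b = S i b'))"

definition rest :: "('a \<Rightarrow> complex) \<Rightarrow> ('a \<Rightarrow> complex)" where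
  "rest b = (SOME b'. b' \<in> basis \<and> b = S (lead b) b')"

lemma lead_rest:
  assumes "b \<in> basis"
  shows "lead b \<in> {1..N}" "rest b \<in> basis" "S (lead b) (rest b) = b"
proof -
  have "\<exists>i. i \<in> {1..N} \<and> (\<exists>b'\<in>basis. b = S i b')"
    using basis_S_cases[OF assms] by metis
  then have lead: "lead b \<in> {1..N} \<and> (\<exists>b'\<in>basis. b = S (lead b) b')"
    unfolding lead_def by (rule someI_ex)
  then have "rest b \<in> basis \<and> b = S (lead b) (rest b)"
    unfolding rest_def by (intro someI_ex[of "\<lambda>b'. b' \<in> basis \<and> b = S (lead b) b'"]) blast
  with lead show "lead b \<in> {1..N}" "rest b \<in> basis" "S (lead b) (rest b) = b" by auto
qed

lemma Sa_basis:
  assumes "b \<in> basis" "i \<in> {1..N}" shows "Sa i b = (if i = lead b then rest b else (\<lambda>_. 0))"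
  using Sa_S[OF assms(2) lead_rest(1)[OF assms(1)] basis_l2[OF lead_rest(2)[OF assms(1)]]]
    lead_rest(3)[OF assms(1)] by simp

lemma lead_S: "i \<in> {1..N} \<Longrightarrow> b \<in> basis \<Longrightarrow> lead (S i b) = i"
  and rest_S: "i \<in> {1..N} \<Longrightarrow> b \<in> basis \<Longrightarrow> rest (S i b) = b"
  using Sa_basis[OF S_in_basis, of i b i] Sa_S[of i i b] basis_l2 basis_nonzero
  by (auto split: if_splits)

fun prefix :: "nat \<Rightarrow> ('a \<Rightarrow> complex) \<Rightarrow> nat list" where
  "prefix 0 b = []"
| "prefix (Suc n) b = lead b # prefix n (rest b)"

lemma length_prefix [simp]: "length (prefix n b) = n"
  by (induction n arbitrary: b) auto

lemma rest_pow_in_basis: "b \<in> basis \<Longrightarrow> (rest ^^ n) b \<in> basis"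
  by (induction n) (auto intro: lead_rest)

lemma prefix_in_words: "b \<in> basis \<Longrightarrow> prefix n b \<in> words N n"
  by (induction n arbitrary: b) (auto simp: mem_words_iff dest: lead_rest)

lemma word_op_prefix: "b \<in> basis \<Longrightarrow> word_op S (prefix n b) ((rest ^^ n) b) = b"
  by (induction n arbitrary: b) (auto simp: funpow_Suc_right lead_rest simp del: funpow.simps)

lemma prefix_word_op: "set W \<subseteq> {1..N} \<Longrightarrow> b \<in> basis \<Longrightarrow> prefix (length W) (word_op S W b) = W"
  by (induction W) (auto simp: lead_S rest_S word_op_S_in_basis)

lemma rest_pow_word_op: "set W \<subseteq> {1..N} \<Longrightarrow> b \<in> basis \<Longrightarrow> (rest ^^ length W) (word_op S W b) = b"
  by (induction W) (auto simp: rest_S word_op_S_in_basis funpow_Suc_right simp del: funpow.simps)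

lemma prefix_Suc_snoc: "prefix (Suc n) b = prefix n b @ [lead ((rest ^^ n) b)]"
  by (induction n arbitrary: b) (auto simp: funpow_Suc_right simp del: funpow.simps)

lemma word_op_Sa_rev_basis:
  "b \<in> basis \<Longrightarrow> K \<in> words N n \<Longrightarrow>
   word_op Sa (rev K) b = (if K = prefix n b then (rest ^^ n) b else (\<lambda>_. 0))"
proof (induction K arbitrary: b n)
  case Nil
  then show ?case by (simp add: words_def)
next
  case (Cons a K)
  then obtain n' where n: "n = Suc n'" and K: "K \<in> words N n'" and a: "a \<in> {1..N}"
    by (cases n) (auto simp: mem_words_iff)
  have Sa_b: "word_op Sa (rev (a # K)) b = word_op Sa (rev K) (Sa a b)"
    by (simp add: word_op_append)
  show ?case
  proof (cases "a = lead b")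
    case True
    have "word_op Sa (rev (a # K)) b = word_op Sa (rev K) (rest b)"
      using Sa_b Sa_basis[OF Cons.prems(1) a] True by simp
    also have "\<dots> = (if K = prefix n' (rest b) then (rest ^^ n') (rest b) else (\<lambda>_. 0))"
      using Cons.IH[OF lead_rest(2)[OF Cons.prems(1)] K] .
    also have "\<dots> = (if a # K = prefix n b then (rest ^^ n) b else (\<lambda>_. 0))"
      using True n by (simp add: funpow_Suc_right del: funpow.simps)
    finally show ?thesis .
  next
    case False
    then show ?thesis
      using Sa_b Sa_basis[OF Cons.prems(1) a] n K word_op_Sa_zero[of "rev K"]
      by (simp add: mem_words_iff)
  qed
qed

lemma word_op_Sa_basis: "b \<in> basis \<Longrightarrow> set L \<subseteq> {1..N} \<Longrightarrow> word_op Sa L b \<in> insert (\<lambda>_. 0) basis"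
  using word_op_Sa_rev_basis[of b "rev L" "length L"] rest_pow_in_basis by (simp add: mem_words_iff)

lemma l2_subset_lclosure_basis: "l2 \<subseteq> lclosure (lspan basis)"
proof -
  define G where
    "G = {word_op S I (word_op Sa (rev L) \<Omega>) | I L. set I \<subseteq> {1..N} \<and> set L \<subseteq> {1..N}}"
  have "\<Omega> \<in> basis" using cycle_vec_in_basis[of 0] cycle_vec_0 k_pos by simp
  have "G \<subseteq> insert (\<lambda>_. 0) basis"
  proof
    fix g assume "g \<in> G"
    then obtain I L where g: "g = word_op S I (word_op Sa (rev L) \<Omega>)" "set I \<subseteq> {1..N}" "set L \<subseteq> {1..N}"
      unfolding G_def by blast
    have "word_op Sa (rev L) \<Omega> \<in> insert (\<lambda>_. 0) basis"
      using g(3) by (intro word_op_Sa_basis \<open>\<Omega> \<in> basis\<close>) simp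
    then show "g \<in> insert (\<lambda>_. 0) basis"
      using g(1,2) word_op_S_in_basis word_op_S_zero by auto
  qed
  then have "lspan G \<subseteq> lspan basis"
    using lspan_mono[of G "insert (\<lambda>_. 0) basis"] unfolding lspan_insert_zero by blast
  then show ?thesis
    using lclosure_mono \<Omega>_cyclic unfolding cyclic_space_def G_def by blast
qed

end

section \<open>Periodic points\<close>

lemma funpow_apply_commute: "(f ^^ m) ((f ^^ n) x) = (f ^^ n) ((f ^^ m) x)"
proof -
  have "(f ^^ m) ((f ^^ n) x) = (f ^^ (m + n)) x" by (simp add: funpow_add)
  also have "\<dots> = (f ^^ (n + m)) x" by (simp add: add.commute)
  also have "\<dots> = (f ^^ n) ((f ^^ m) x)" by (simp add: funpow_add)
  finally show ?thesis .
qed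

lemma funpow_mult_fixpoint: "(f ^^ p) z = z \<Longrightarrow> (f ^^ (p * q)) z = z"
  by (induction q) (simp_all add: funpow_add)

definition fun_period :: "('b \<Rightarrow> 'b) \<Rightarrow> 'b \<Rightarrow> nat" where
  "fun_period f z = (LEAST p. 0 < p \<and> (f ^^ p) z = z)"

lemma fun_period:
  assumes "0 < p" "(f ^^ p) z = z"
  shows "0 < fun_period f z" "(f ^^ fun_period f z) z = z"
    and "\<And>q. 0 < q \<Longrightarrow> q < fun_period f z \<Longrightarrow> (f ^^ q) z \<noteq> z"
proof -
  have "0 < fun_period f z \<and> (f ^^ fun_period f z) z = z"
    unfolding fun_period_def by (rule LeastI_ex) (use assms in blast)
  then show "0 < fun_period f z" "(f ^^ fun_period f z) z = z" by auto
  show "\<And>q. 0 < q \<Longrightarrow> q < fun_period f z \<Longrightarrow> (f ^^ q) z \<noteq> z"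
    unfolding fun_period_def using not_less_Least by blast
qed

lemma inj_on_funpow_period:
  assumes "0 < p" "(f ^^ p) z = z"
  shows "inj_on (\<lambda>i. (f ^^ i) z) {..<fun_period f z}"
proof -
  have no_collision: False
    if "a < b" "b < fun_period f z" "(f ^^ a) z = (f ^^ b) z" for a b
  proof -
    have "(f ^^ (fun_period f z - b + a)) z = (f ^^ (fun_period f z - b)) ((f ^^ a) z)"
      by (simp add: funpow_add)
    also have "\<dots> = (f ^^ (fun_period f z - b)) ((f ^^ b) z)"
      using that(3) by simp
    also have "\<dots> = (f ^^ (fun_period f z - b + b)) z"
      by (simp add: funpow_add)
    also have "\<dots> = z"
      using that(2) fun_period(2)[OF assms] by simp
    finally have "(f ^^ (fun_period f z - b + a)) z = z" .
    moreover have "0 < fun_period f z - b + a" "fun_period f z - b + a < fun_period f z"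
      using that(1,2) by auto
    ultimately show False using fun_period(3)[OF assms] by metis
  qed
  show ?thesis
  proof (rule inj_onI)
    fix i j assume "i \<in> {..<fun_period f z}" "j \<in> {..<fun_period f z}" "(f ^^ i) z = (f ^^ j) z"
    then have ij: "i < fun_period f z" "j < fun_period f z" "(f ^^ i) z = (f ^^ j) z" by auto
    show "i = j"
    proof (rule ccontr)
      assume "i \<noteq> j"
      then have "i < j \<or> j < i" by linarith
      then show False using no_collision[of i j] no_collision[of j i] ij by auto
    qed
  qed
qed

section \<open>Connected components of the Mealy diagram\<close>

lemma equiv_Image_eq_class:
  assumes "equiv A r" "a \<in> X" "X \<subseteq> r `` {a}"
  shows "r `` X = r `` {a}"
proof
  show "r `` {a} \<subseteq> r `` X" using assms(2) by blast
  show "r `` X \<subseteq> r `` {a}"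
  proof
    fix y assume "y \<in> r `` X"
    then obtain x where "x \<in> X" "(x, y) \<in> r" by blast
    then have "(a, x) \<in> r" using assms(3) by blast
    with \<open>(x, y) \<in> r\<close> show "y \<in> r `` {a}"
      using assms(1) unfolding equiv_def trans_def by blast
  qed
qed

lemma equiv_mealy_conn: "equiv (mealy_states N l) (mealy_conn N l \<sigma>)"
proof -
  define E where "E = {(q, q'). \<exists>lab. (q, lab, q') \<in> mealy_edges N l \<sigma>}"
  define Q where "Q = mealy_states N l"
  have conn: "mealy_conn N l \<sigma> = (E \<union> E\<inverse>)\<^sup>* \<inter> (Q \<times> Q)"
    unfolding mealy_conn_def E_def Q_def Let_def ..
  have "(E \<union> E\<inverse>)\<inverse> = E \<union> E\<inverse>" by auto
  then have "(a, b) \<in> (E \<union> E\<inverse>)\<^sup>* \<Longrightarrow> (b, a) \<in> (E \<union> E\<inverse>)\<^sup>*" for a b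
    using rtrancl_converseI[of a b "E \<union> E\<inverse>"] by simp
  then have "equiv Q ((E \<union> E\<inverse>)\<^sup>* \<inter> (Q \<times> Q))"
    by (intro equivI) (auto simp: refl_on_def sym_def trans_def intro: rtrancl_trans)
  then show ?thesis unfolding conn Q_def .
qed

lemma mealy_edge_conn:
  assumes "(q, lab, q') \<in> mealy_edges N l \<sigma>" "q' \<in> mealy_states N l"
  shows "(q, q') \<in> mealy_conn N l \<sigma>"
proof -
  define E where "E = {(q, q'). \<exists>lab. (q, lab, q') \<in> mealy_edges N l \<sigma>}"
  have "(q, q') \<in> E" unfolding E_def using assms(1) by blast
  then have "(q, q') \<in> (E \<union> E\<inverse>)\<^sup>*" by blast
  moreover have "q \<in> mealy_states N l" using assms(1) unfolding mealy_edges_def by blast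
  ultimately show ?thesis using assms(2) unfolding mealy_conn_def E_def Let_def by blast
qed

section \<open>The representation \<open>P(J) \<circ> \<psi>\<^sub>\<sigma>\<close>\<close>

locale psi_cycle_rep = cycle_rep +
  fixes l :: nat and \<sigma> :: "nat list \<Rightarrow> nat list"
  assumes l_pos: "l \<ge> 1" and \<sigma>_bij: "bij_betw \<sigma> (words N l) (words N l)"
begin

definition \<sigma>_inv :: "nat list \<Rightarrow> nat list" where
  "\<sigma>_inv = inv_into (words N l) \<sigma>"

lemma \<sigma>_in_words: "K \<in> words N l \<Longrightarrow> \<sigma> K \<in> words N l"
  by (rule bij_betw_apply[OF \<sigma>_bij])

lemma \<sigma>_inv_in_words: "K \<in> words N l \<Longrightarrow> \<sigma>_inv K \<in> words N l"
  unfolding \<sigma>_inv_def by (rule bij_betw_apply[OF bij_betw_inv_into[OF \<sigma>_bij]])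

lemma \<sigma>_\<sigma>_inv: "K \<in> words N l \<Longrightarrow> \<sigma> (\<sigma>_inv K) = K"
  unfolding \<sigma>_inv_def by (rule bij_betw_inv_into_right[OF \<sigma>_bij])

lemma \<sigma>_inv_\<sigma>: "K \<in> words N l \<Longrightarrow> \<sigma>_inv (\<sigma> K) = K"
  unfolding \<sigma>_inv_def by (rule bij_betw_inv_into_left[OF \<sigma>_bij])

lemma \<sigma>_inv_ConsE:
  assumes "K \<in> words N l"
  obtains y ys where "\<sigma>_inv K = y # ys" "y \<in> {1..N}" "set ys \<subseteq> {1..N}" "length ys = l - 1"
proof -
  have "\<sigma>_inv K \<in> words N l" by (rule \<sigma>_inv_in_words[OF assms])
  with l_pos show ?thesis by (cases "\<sigma>_inv K") (auto simp: mem_words_iff intro!: that)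
qed

definition u_basis :: "('a \<Rightarrow> complex) \<Rightarrow> ('a \<Rightarrow> complex)" where
  "u_basis b = word_op S (\<sigma> (prefix l b)) ((rest ^^ l) b)"

definition u_basis_inv :: "('a \<Rightarrow> complex) \<Rightarrow> ('a \<Rightarrow> complex)" where
  "u_basis_inv b = word_op S (\<sigma>_inv (prefix l b)) ((rest ^^ l) b)"

lemma prefix_l_word_op:
  assumes "K \<in> words N l" "b \<in> basis"
  shows "prefix l (word_op S K b) = K" "(rest ^^ l) (word_op S K b) = b"
  using prefix_word_op[of K b] rest_pow_word_op[of K b] assms by (auto simp: mem_words_iff)

lemma u_basis_in_basis: "b \<in> basis \<Longrightarrow> u_basis b \<in> basis"
  unfolding u_basis_def
  by (intro word_op_S_in_basis rest_pow_in_basis words_set[OF \<sigma>_in_words[OF prefix_in_words]])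

lemma u_basis_inv_in_basis: "b \<in> basis \<Longrightarrow> u_basis_inv b \<in> basis"
  unfolding u_basis_inv_def
  by (intro word_op_S_in_basis rest_pow_in_basis words_set[OF \<sigma>_inv_in_words[OF prefix_in_words]])

lemma u_basis_inv_u_basis: "b \<in> basis \<Longrightarrow> u_basis_inv (u_basis b) = b"
  using prefix_l_word_op[OF \<sigma>_in_words[OF prefix_in_words] rest_pow_in_basis, of b]
  unfolding u_basis_inv_def u_basis_def by (simp add: \<sigma>_inv_\<sigma> prefix_in_words word_op_prefix)

lemma u_basis_u_basis_inv: "b \<in> basis \<Longrightarrow> u_basis (u_basis_inv b) = b"
  using prefix_l_word_op[OF \<sigma>_inv_in_words[OF prefix_in_words] rest_pow_in_basis, of b]
  unfolding u_basis_inv_def u_basis_def by (simp add: \<sigma>_\<sigma>_inv prefix_in_words word_op_prefix)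

lemma u_op_basis:
  assumes "b \<in> basis" shows "u_op N l \<sigma> S Sa b = u_basis b"
proof
  fix x
  have "u_op N l \<sigma> S Sa b x
      = (\<Sum>K\<in>words N l. if K = prefix l b then word_op S (\<sigma> K) ((rest ^^ l) b) x else 0)"
    unfolding u_op_def
    by (intro sum.cong refl) (auto simp: word_op_Sa_rev_basis[OF assms]
        word_op_S_zero[OF conjunct2[OF iffD1[OF mem_words_iff \<sigma>_in_words]]])
  also have "\<dots> = u_basis b x"
    unfolding u_basis_def using prefix_in_words[OF assms] finite_words by simp
  finally show "u_op N l \<sigma> S Sa b x = u_basis b x" .
qed

lemma u_adj_basis:
  assumes "b \<in> basis" shows "u_adj N l \<sigma> S Sa b = u_basis_inv b"
proof
  fix x
  have "word_op S K (word_op Sa (rev (\<sigma> K)) b) x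
      = (if K = \<sigma>_inv (prefix l b) then word_op S K ((rest ^^ l) b) x else 0)"
    if K: "K \<in> words N l" for K
  proof -
    have "\<sigma> K = prefix l b \<longleftrightarrow> K = \<sigma>_inv (prefix l b)"
      using \<sigma>_inv_\<sigma>[OF K] \<sigma>_\<sigma>_inv[OF prefix_in_words[OF assms]] by auto
    then show ?thesis
      using word_op_Sa_rev_basis[OF assms \<sigma>_in_words[OF K]] word_op_S_zero[of K] K
      by (auto simp: mem_words_iff)
  qed
  then have "u_adj N l \<sigma> S Sa b x
      = (\<Sum>K\<in>words N l. if K = \<sigma>_inv (prefix l b) then word_op S K ((rest ^^ l) b) x else 0)"
    unfolding u_adj_def by (intro sum.cong) auto
  also have "\<dots> = u_basis_inv b x"
    unfolding u_basis_inv_def using \<sigma>_inv_in_words[OF prefix_in_words[OF assms]] finite_words by simp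
  finally show "u_adj N l \<sigma> S Sa b x = u_basis_inv b x" .
qed

lemma u_op_zero: "u_op N l \<sigma> S Sa (\<lambda>_. 0) = (\<lambda>_. 0)"
  unfolding u_op_def
proof (intro ext sum.neutral ballI)
  fix x K assume "K \<in> words N l"
  then show "word_op S (\<sigma> K) (word_op Sa (rev K) (\<lambda>_. 0)) x = 0"
    using word_op_Sa_zero[of "rev K"] word_op_S_zero[OF words_set[OF \<sigma>_in_words]] words_set
    by simp
qed

lemma u_adj_zero: "u_adj N l \<sigma> S Sa (\<lambda>_. 0) = (\<lambda>_. 0)"
  unfolding u_adj_def
proof (intro ext sum.neutral ballI)
  fix x K assume "K \<in> words N l"
  then show "word_op S K (word_op Sa (rev (\<sigma> K)) (\<lambda>_. 0)) x = 0"
    using word_op_Sa_zero[of "rev (\<sigma> K)"] word_op_S_zero[OF words_set] words_set[OF \<sigma>_in_words]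
    by simp
qed

abbreviation T where "T \<equiv> psi_S N l \<sigma> S Sa"
abbreviation T_adj where "T_adj \<equiv> psi_Sa N l \<sigma> S Sa"

lemma T_basis: "i \<in> {1..N} \<Longrightarrow> b \<in> basis \<Longrightarrow> T i b = u_basis (S i b)"
  unfolding psi_S_def using u_op_basis S_in_basis by simp

lemma T_zero: "i \<in> {1..N} \<Longrightarrow> T i (\<lambda>_. 0) = (\<lambda>_. 0)"
  unfolding psi_S_def using u_op_zero S_zero by simp

lemma T_adj_zero: "i \<in> {1..N} \<Longrightarrow> T_adj i (\<lambda>_. 0) = (\<lambda>_. 0)"
  unfolding psi_Sa_def using u_adj_zero Sa_zero by simp

text \<open>The basis is just as well adapted to \<open>\<pi> \<circ> \<psi>\<^sub>\<sigma>\<close>: every basis vector is \<open>T i b'\<close>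
  for a unique letter \<open>i\<close> and basis vector \<open>b' = psi_rest b\<close>.\<close>

definition psi_lead :: "('a \<Rightarrow> complex) \<Rightarrow> nat" where
  "psi_lead b = lead (u_basis_inv b)"

definition psi_rest :: "('a \<Rightarrow> complex) \<Rightarrow> ('a \<Rightarrow> complex)" where
  "psi_rest b = rest (u_basis_inv b)"

lemma psi_lead_range: "b \<in> basis \<Longrightarrow> psi_lead b \<in> {1..N}"
  unfolding psi_lead_def using lead_rest u_basis_inv_in_basis by blast

lemma psi_rest_in_basis: "b \<in> basis \<Longrightarrow> psi_rest b \<in> basis"
  unfolding psi_rest_def using lead_rest u_basis_inv_in_basis by blast

lemma T_psi_lead_rest: "b \<in> basis \<Longrightarrow> T (psi_lead b) (psi_rest b) = b"
  unfolding psi_lead_def psi_rest_def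
  using T_basis lead_rest u_basis_inv_in_basis u_basis_u_basis_inv by simp

lemma T_in_basis: "i \<in> {1..N} \<Longrightarrow> b \<in> basis \<Longrightarrow> T i b \<in> basis"
  using T_basis u_basis_in_basis S_in_basis by simp

lemma psi_rest_T: "i \<in> {1..N} \<Longrightarrow> b \<in> basis \<Longrightarrow> psi_rest (T i b) = b"
  unfolding psi_rest_def using T_basis u_basis_inv_u_basis S_in_basis rest_S by simp

lemma T_adj_basis:
  "i \<in> {1..N} \<Longrightarrow> b \<in> basis \<Longrightarrow> T_adj i b = (if i = psi_lead b then psi_rest b else (\<lambda>_. 0))"
  unfolding psi_Sa_def psi_lead_def psi_rest_def
  using u_adj_basis Sa_basis u_basis_inv_in_basis by simp

lemma psi_rest_eq:
  assumes "b \<in> basis"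
  shows "psi_rest b = word_op S (tl (\<sigma>_inv (prefix l b))) ((rest ^^ l) b)"
proof -
  obtain y ys where yys: "\<sigma>_inv (prefix l b) = y # ys" "y \<in> {1..N}" "set ys \<subseteq> {1..N}"
    "length ys = l - 1" by (rule \<sigma>_inv_ConsE[OF prefix_in_words[OF assms]])
  then have "rest (S y (word_op S ys ((rest ^^ l) b))) = word_op S ys ((rest ^^ l) b)"
    using assms by (intro rest_S word_op_S_in_basis rest_pow_in_basis)
  then show ?thesis unfolding psi_rest_def u_basis_inv_def yys(1) by simp
qed


lemma psi_rest_pow_in_basis: "b \<in> basis \<Longrightarrow> (psi_rest ^^ n) b \<in> basis"
  by (induction n) (auto intro: psi_rest_in_basis)

fun psi_prefix :: "nat \<Rightarrow> ('a \<Rightarrow> complex) \<Rightarrow> nat list" where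
  "psi_prefix 0 b = []"
| "psi_prefix (Suc n) b = psi_lead b # psi_prefix n (psi_rest b)"

lemma length_psi_prefix [simp]: "length (psi_prefix n b) = n"
  by (induction n arbitrary: b) auto

lemma psi_prefix_set: "b \<in> basis \<Longrightarrow> set (psi_prefix n b) \<subseteq> {1..N}"
  by (induction n arbitrary: b) (auto dest: psi_lead_range psi_rest_in_basis)

lemma word_op_T_psi_prefix: "b \<in> basis \<Longrightarrow> word_op T (psi_prefix n b) ((psi_rest ^^ n) b) = b"
  by (induction n arbitrary: b)
    (auto simp: funpow_Suc_right T_psi_lead_rest psi_rest_in_basis simp del: funpow.simps)

lemma drop_psi_prefix: "q \<le> n \<Longrightarrow> drop q (psi_prefix n b) = psi_prefix (n - q) ((psi_rest ^^ q) b)"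
proof (induction q arbitrary: n b)
  case (Suc q)
  then obtain n' where "n = Suc n'" by (cases n) auto
  with Suc show ?case by (simp add: funpow_Suc_right del: funpow.simps)
qed simp

lemma cycle_vec_expand:
  "c < k \<Longrightarrow> \<exists>V c'. c' < k \<and> length V = n \<and> set V \<subseteq> {1..N} \<and> cycle_vec c = word_op S V (cycle_vec c')"
proof (induction n)
  case 0
  then show ?case by (intro exI[of _ "[]"] exI[of _ c]) simp
next
  case (Suc n)
  then obtain V c' where V: "c' < k" "length V = n" "set V \<subseteq> {1..N}" "cycle_vec c = word_op S V (cycle_vec c')"
    by blast
  have "cycle_vec c = word_op S (V @ [J ! c']) (cycle_vec (Suc c' mod k))"
    using V(4) cycle_vec_step[OF V(1)] by (simp add: word_op_append)
  moreover have "set (V @ [J ! c']) \<subseteq> {1..N}" "Suc c' mod k < k"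
    using V J_nth k_pos by auto
  ultimately show ?case using V(2) by (intro exI[of _ "V @ [J ! c']"] exI[of _ "Suc c' mod k"]) simp
qed

text \<open>\<open>psi_rest\<close> deletes one of the first \<open>l\<close> letters, so every \<open>psi_rest\<close>-orbit ends up in the
  finite set \<open>short_basis\<close>.\<close>

lemma psi_rest_word_op_cycle_vec:
  assumes W: "set W \<subseteq> {1..N}" "l \<le> length W" and "c < k"
  obtains W' where "set W' \<subseteq> {1..N}" "length W' = length W - 1"
    "psi_rest (word_op S W (cycle_vec c)) = word_op S W' (cycle_vec c)"
proof -
  have K: "take l W \<in> words N l"
    using W by (auto simp: mem_words_iff dest: in_set_takeD)
  have R: "set (drop l W) \<subseteq> {1..N}" using W(1) by (auto dest: in_set_dropD)
  define r where "r = word_op S (drop l W) (cycle_vec c)"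
  have "r \<in> basis" unfolding r_def using R \<open>c < k\<close> by (rule word_op_cycle_vec_in_basis)
  have b: "word_op S W (cycle_vec c) = word_op S (take l W) r"
    unfolding r_def by (metis append_take_drop_id comp_apply word_op_append)
  obtain y ys where yys: "\<sigma>_inv (take l W) = y # ys" "y \<in> {1..N}" "set ys \<subseteq> {1..N}"
    "length ys = l - 1" by (rule \<sigma>_inv_ConsE[OF K])
  then have "set (ys @ drop l W) \<subseteq> {1..N}" "length (ys @ drop l W) = length W - 1"
    using R W(2) l_pos by auto
  moreover have "psi_rest (word_op S W (cycle_vec c)) = word_op S (ys @ drop l W) (cycle_vec c)"
    using psi_rest_eq[OF word_op_S_in_basis[OF words_set[OF K] \<open>r \<in> basis\<close>]]
      prefix_l_word_op[OF K \<open>r \<in> basis\<close>] yys(1) unfolding b by (simp add: word_op_append r_def)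
  ultimately show ?thesis using that by blast
qed

definition short_basis :: "('a \<Rightarrow> complex) set" where
  "short_basis = {word_op S W (cycle_vec c) | W c. set W \<subseteq> {1..N} \<and> length W < l \<and> c < k}"

lemma finite_short_basis: "finite short_basis"
proof -
  have "short_basis
      \<subseteq> (\<lambda>(W, c). word_op S W (cycle_vec c)) ` ({W. set W \<subseteq> {1..N} \<and> length W \<le> l} \<times> {..<k})"
    unfolding short_basis_def by force
  moreover have "finite {W. set W \<subseteq> {1..N} \<and> length W \<le> l}"
    by (rule finite_lists_length_le) simp
  ultimately show ?thesis by (auto intro: finite_subset)
qed

lemma psi_rest_short_basis:
  assumes "b \<in> short_basis" shows "psi_rest b \<in> short_basis"
proof -
  obtain W c where b: "b = word_op S W (cycle_vec c)" "set W \<subseteq> {1..N}" "length W < l" "c < k"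
    using assms unfolding short_basis_def by blast
  obtain V c' where V: "c' < k" "length V = l - length W" "set V \<subseteq> {1..N}"
    "cycle_vec c = word_op S V (cycle_vec c')"
    using cycle_vec_expand[OF b(4)] by blast
  have "b = word_op S (W @ V) (cycle_vec c')" using b(1) V(4) by (simp add: word_op_append)
  moreover obtain W' where W': "set W' \<subseteq> {1..N}" "length W' = length (W @ V) - 1"
    "psi_rest (word_op S (W @ V) (cycle_vec c')) = word_op S W' (cycle_vec c')"
    using psi_rest_word_op_cycle_vec[of "W @ V" c'] b V by auto
  moreover have "length W' < l" using W'(2) V(2) b(3) l_pos by simp
  ultimately have "psi_rest b = word_op S W' (cycle_vec c')" "length W' < l" by simp_all
  then show ?thesis using W'(1) V(1) unfolding short_basis_def by blast
qed

lemma psi_rest_pow_short_basis: "b \<in> short_basis \<Longrightarrow> (psi_rest ^^ n) b \<in> short_basis"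
  by (induction n) (auto intro: psi_rest_short_basis)

lemma psi_rest_pow_reaches_short_basis:
  assumes "b \<in> basis" obtains n where "(psi_rest ^^ n) b \<in> short_basis"
proof -
  have "\<exists>n. (psi_rest ^^ n) (word_op S W (cycle_vec c)) \<in> short_basis"
    if "set W \<subseteq> {1..N}" "c < k" for W c
    using that
  proof (induction "length W" arbitrary: W rule: less_induct)
    case less
    show ?case
    proof (cases "length W < l")
      case True
      then show ?thesis using less.prems unfolding short_basis_def by (intro exI[of _ 0]) auto
    next
      case False
      then have "l \<le> length W" by simp
      then obtain W' where W': "set W' \<subseteq> {1..N}" "length W' = length W - 1"
        "psi_rest (word_op S W (cycle_vec c)) = word_op S W' (cycle_vec c)"
        by (rule psi_rest_word_op_cycle_vec[OF less.prems(1) _ less.prems(2)])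
      have "length W' < length W" using W'(2) False l_pos by simp
      then have "\<exists>n. (psi_rest ^^ n) (word_op S W' (cycle_vec c)) \<in> short_basis"
        using less.hyps W'(1) less.prems(2) by blast
      then obtain n where "(psi_rest ^^ n) (word_op S W' (cycle_vec c)) \<in> short_basis" ..
      then show ?thesis
        using W'(3) by (intro exI[of _ "Suc n"]) (simp add: funpow_Suc_right del: funpow.simps)
    qed
  qed
  moreover obtain W c where "b = word_op S W (cycle_vec c)" "set W \<subseteq> {1..N}" "c < k"
    using assms unfolding basis_def by blast
  ultimately obtain n where "(psi_rest ^^ n) b \<in> short_basis" by blast
  then show ?thesis by (rule that)
qed

definition tail_rel :: "(('a \<Rightarrow> complex) \<times> ('a \<Rightarrow> complex)) set" where
  "tail_rel = {(b, b'). b \<in> basis \<and> b' \<in> basis \<and> (\<exists>n m. (psi_rest ^^ n) b = (psi_rest ^^ m) b')}"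

lemma tail_relI:
  "b \<in> basis \<Longrightarrow> b' \<in> basis \<Longrightarrow> (psi_rest ^^ n) b = (psi_rest ^^ m) b' \<Longrightarrow> (b, b') \<in> tail_rel"
  unfolding tail_rel_def by blast

lemma tail_relE:
  assumes "(b, b') \<in> tail_rel"
  obtains n m where "b \<in> basis" "b' \<in> basis" "(psi_rest ^^ n) b = (psi_rest ^^ m) b'"
  using assms unfolding tail_rel_def by blast

lemma equiv_tail_rel: "equiv basis tail_rel"
proof (rule equivI)
  show "tail_rel \<subseteq> basis \<times> basis"
    by (auto elim: tail_relE)
  show "refl_on basis tail_rel"
    unfolding refl_on_def by (auto elim: tail_relE intro: tail_relI[where n = 0 and m = 0])
  show "sym tail_rel"
  proof (rule symI)
    fix a b assume "(a, b) \<in> tail_rel"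
    then obtain n m where "a \<in> basis" "b \<in> basis" "(psi_rest ^^ n) a = (psi_rest ^^ m) b"
      by (rule tail_relE)
    then show "(b, a) \<in> tail_rel" by (intro tail_relI[of b a m n]) simp_all
  qed
  show "trans tail_rel"
  proof (rule transI)
    fix a b c assume "(a, b) \<in> tail_rel" "(b, c) \<in> tail_rel"
    then obtain n m p q where ac: "a \<in> basis" "c \<in> basis"
      and nm: "(psi_rest ^^ n) a = (psi_rest ^^ m) b" and pq: "(psi_rest ^^ p) b = (psi_rest ^^ q) c"
      by (elim tail_relE)
    have "(psi_rest ^^ (p + n)) a = (psi_rest ^^ p) ((psi_rest ^^ m) b)"
      using nm by (simp only: funpow_add comp_apply)
    also have "\<dots> = (psi_rest ^^ m) ((psi_rest ^^ q) c)"
      using pq by (simp only: funpow_apply_commute[of p])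
    also have "\<dots> = (psi_rest ^^ (m + q)) c"
      by (simp only: funpow_add comp_apply)
    finally show "(a, c) \<in> tail_rel" by (rule tail_relI[OF ac])
  qed
qed

lemma tail_rel_psi_rest_pow:
  assumes "b \<in> basis" shows "(b, (psi_rest ^^ n) b) \<in> tail_rel"
proof -
  have "(psi_rest ^^ n) b = (psi_rest ^^ 0) ((psi_rest ^^ n) b)" by simp
  with assms psi_rest_pow_in_basis[OF assms] show ?thesis by (rule tail_relI)
qed

lemma finite_tail_classes: "finite (basis // tail_rel)"
proof -
  have "basis // tail_rel \<subseteq> (\<lambda>b. tail_rel `` {b}) ` short_basis"
  proof
    fix C assume "C \<in> basis // tail_rel"
    then obtain b where b: "b \<in> basis" "C = tail_rel `` {b}" by (rule quotientE)
    obtain n where "(psi_rest ^^ n) b \<in> short_basis"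
      using b(1) by (rule psi_rest_pow_reaches_short_basis)
    moreover have "C = tail_rel `` {(psi_rest ^^ n) b}"
      using b equiv_class_eq[OF equiv_tail_rel tail_rel_psi_rest_pow] by simp
    ultimately show "C \<in> (\<lambda>b. tail_rel `` {b}) ` short_basis" by blast
  qed
  then show ?thesis using finite_short_basis finite_surj by blast
qed

lemma tail_class_periodic_point:
  assumes "b \<in> basis" obtains z p where "(b, z) \<in> tail_rel" "p > 0" "(psi_rest ^^ p) z = z"
proof -
  obtain n where n: "(psi_rest ^^ n) b \<in> short_basis"
    using psi_rest_pow_reaches_short_basis[OF assms] .
  define g where "g j = (psi_rest ^^ (j + n)) b" for j
  have "g ` {0..card short_basis} \<subseteq> short_basis"
    unfolding g_def using psi_rest_pow_short_basis[OF n] by (auto simp: funpow_add)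
  then have "\<not> inj_on g {0..card short_basis}"
    using card_inj_on_le[OF _ _ finite_short_basis] by fastforce
  then obtain i j where "i < j" "g i = g j"
    unfolding inj_on_def by (metis linorder_neqE_nat)
  have "(psi_rest ^^ (j - i)) (g i) = (psi_rest ^^ (j - i + (i + n))) b"
    unfolding g_def by (simp only: funpow_add comp_apply)
  also have "j - i + (i + n) = j + n" using \<open>i < j\<close> by simp
  finally have periodic: "(psi_rest ^^ (j - i)) (g i) = g i"
    using \<open>g i = g j\<close> unfolding g_def by simp
  have "(b, g i) \<in> tail_rel" unfolding g_def by (rule tail_rel_psi_rest_pow[OF assms])
  moreover have "0 < j - i" using \<open>i < j\<close> by simp
  ultimately show ?thesis using periodic by (rule that)
qed


lemma tail_rel_trans: "(a, b) \<in> tail_rel \<Longrightarrow> (b, c) \<in> tail_rel \<Longrightarrow> (a, c) \<in> tail_rel"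
  using equiv_tail_rel unfolding equiv_def trans_def by blast

lemma tail_rel_in_basis: "(a, b) \<in> tail_rel \<Longrightarrow> b \<in> basis"
  by (elim tail_relE)

lemma tail_class_word_op_T:
  assumes "z \<in> basis" "0 < p" "(psi_rest ^^ p) z = z" "(z, b) \<in> tail_rel"
  obtains I where "set I \<subseteq> {1..N}" "b = word_op T I z"
proof -
  obtain n m where b: "b \<in> basis" and nm: "(psi_rest ^^ n) z = (psi_rest ^^ m) b"
    using assms(4) by (rule tail_relE)
  \<comment> \<open>going \<open>(p - 1) n\<close> further round the cycle of \<open>z\<close> brings \<open>(psi_rest ^^ m) b\<close> back to \<open>z\<close>\<close>
  define t where "t = (p - 1) * n"
  have "t + n = p * n" using assms(2) unfolding t_def by (cases p) auto
  have "(psi_rest ^^ (t + m)) b = (psi_rest ^^ (t + n)) z"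
    using nm by (simp add: funpow_add)
  also have "\<dots> = z"
    using \<open>t + n = p * n\<close> funpow_mult_fixpoint[OF assms(3), of n] by simp
  finally have "b = word_op T (psi_prefix (t + m) b) z"
    using word_op_T_psi_prefix[OF b, of "t + m"] by simp
  with psi_prefix_set[OF b] show ?thesis by (rule that)
qed

lemma T_tail_class:
  assumes "i \<in> {1..N}" "x \<in> insert (\<lambda>_. 0) (tail_rel `` {z})"
  shows "T i x \<in> insert (\<lambda>_. 0) (tail_rel `` {z})"
proof (cases "x = (\<lambda>_. 0)")
  case True
  then show ?thesis using T_zero[OF assms(1)] by simp
next
  case False
  then have zx: "(z, x) \<in> tail_rel" using assms(2) by simp
  then have "x \<in> basis" by (rule tail_rel_in_basis)
  then have "(x, T i x) \<in> tail_rel"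
    using tail_relI[of x "T i x" 0 1] T_in_basis[OF assms(1)] psi_rest_T[OF assms(1)] by simp
  with zx show ?thesis using tail_rel_trans by blast
qed

lemma T_adj_tail_class:
  assumes "i \<in> {1..N}" "x \<in> insert (\<lambda>_. 0) (tail_rel `` {z})"
  shows "T_adj i x \<in> insert (\<lambda>_. 0) (tail_rel `` {z})"
proof (cases "x = (\<lambda>_. 0)")
  case True
  then show ?thesis using T_adj_zero[OF assms(1)] by simp
next
  case False
  then have zx: "(z, x) \<in> tail_rel" using assms(2) by simp
  then have "x \<in> basis" by (rule tail_rel_in_basis)
  then have "(x, psi_rest x) \<in> tail_rel" using tail_rel_psi_rest_pow[of x 1] by simp
  with zx have "(z, psi_rest x) \<in> tail_rel" by (rule tail_rel_trans)
  then show ?thesis using T_adj_basis[OF assms(1) \<open>x \<in> basis\<close>] by simp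
qed

lemma word_op_T_tail_class:
  "set I \<subseteq> {1..N} \<Longrightarrow> x \<in> insert (\<lambda>_. 0) (tail_rel `` {z})
   \<Longrightarrow> word_op T I x \<in> insert (\<lambda>_. 0) (tail_rel `` {z})"
proof (induction I)
  case (Cons a I)
  then have "a \<in> {1..N}" "word_op T I x \<in> insert (\<lambda>_. 0) (tail_rel `` {z})" by auto
  then show ?case by (simp only: word_op.simps comp_apply) (rule T_tail_class)
qed simp

lemma word_op_T_adj_tail_class:
  "set I \<subseteq> {1..N} \<Longrightarrow> x \<in> insert (\<lambda>_. 0) (tail_rel `` {z})
   \<Longrightarrow> word_op T_adj I x \<in> insert (\<lambda>_. 0) (tail_rel `` {z})"
proof (induction I)
  case (Cons a I)
  then have "a \<in> {1..N}" "word_op T_adj I x \<in> insert (\<lambda>_. 0) (tail_rel `` {z})" by auto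
  then show ?case by (simp only: word_op.simps comp_apply) (rule T_adj_tail_class)
qed simp

lemma word_op_T_drop_psi_prefix:
  assumes "z \<in> basis" "(psi_rest ^^ p) z = z" "q \<le> p"
  shows "word_op T (drop q (psi_prefix p z)) z = (psi_rest ^^ q) z"
proof -
  have "(psi_rest ^^ (p - q)) ((psi_rest ^^ q) z) = (psi_rest ^^ (p - q + q)) z"
    by (simp add: funpow_add)
  also have "\<dots> = z" using assms(2,3) by simp
  finally have "(psi_rest ^^ (p - q)) ((psi_rest ^^ q) z) = z" .
  then show ?thesis
    using drop_psi_prefix[OF assms(3)] word_op_T_psi_prefix[OF psi_rest_pow_in_basis[OF assms(1)], of "p - q" q]
    by simp
qed

lemma cyclic_space_tail_class:
  assumes z: "z \<in> basis" "0 < p" "(psi_rest ^^ p) z = z"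
  shows "cyclic_space N T T_adj z = lclosure (lspan (tail_rel `` {z}))"
proof -
  define G where
    "G = {word_op T I (word_op T_adj (rev L) z) | I L. set I \<subseteq> {1..N} \<and> set L \<subseteq> {1..N}}"
  have "lspan G = lspan (tail_rel `` {z})"
  proof (rule lspan_eq_if_between)
    show "tail_rel `` {z} \<subseteq> G"
    proof
      fix b assume "b \<in> tail_rel `` {z}"
      then obtain I where "set I \<subseteq> {1..N}" "b = word_op T I z"
        using tail_class_word_op_T[OF z] by blast
      then show "b \<in> G" unfolding G_def by (intro CollectI exI[of _ I] exI[of _ "[]"]) simp
    qed
    show "G \<subseteq> insert (\<lambda>_. 0) (tail_rel `` {z})"
    proof
      fix g assume "g \<in> G"
      then obtain I L where g: "g = word_op T I (word_op T_adj (rev L) z)"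
        "set I \<subseteq> {1..N}" "set L \<subseteq> {1..N}"
        unfolding G_def by blast
      have "word_op T_adj (rev L) z \<in> insert (\<lambda>_. 0) (tail_rel `` {z})"
        using g(3) equiv_class_self[OF equiv_tail_rel z(1)] by (intro word_op_T_adj_tail_class) auto
      from word_op_T_tail_class[OF g(2) this] show "g \<in> insert (\<lambda>_. 0) (tail_rel `` {z})"
        unfolding g(1) .
    qed
  qed
  then show ?thesis unfolding cyclic_space_def G_def by simp
qed

lemma is_P_tail_class:
  assumes z: "z \<in> basis" "0 < p" "(psi_rest ^^ p) z = z"
  defines "P \<equiv> fun_period psi_rest z"
  shows "is_P N T T_adj (psi_prefix P z) (lclosure (lspan (tail_rel `` {z})))"
  unfolding is_P_def
proof (intro bexI conjI)
  show "z \<in> lclosure (lspan (tail_rel `` {z}))"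
    by (intro lclosure_base basis_l2 z lspan_base equiv_class_self[OF equiv_tail_rel])
  show "l2norm z = 1"
    using cinner_basis_self[OF z(1)] cinner_self[of z] by (simp add: l2norm_eq_sqrt)
  show "cyclic_space N T T_adj z = lclosure (lspan (tail_rel `` {z}))"
    by (rule cyclic_space_tail_class[OF z])
  have P: "(psi_rest ^^ P) z = z" unfolding P_def by (rule fun_period(2)[OF z(2,3)])
  show "word_op T (psi_prefix P z) z = z"
    using word_op_T_drop_psi_prefix[OF z(1) P, of 0] by simp
  show "\<forall>i\<in>{1..length (psi_prefix P z)}. \<forall>i'\<in>{1..length (psi_prefix P z)}.
      cinner (word_op T (drop (i - 1) (psi_prefix P z)) z) (word_op T (drop (i' - 1) (psi_prefix P z)) z)
        = (if i = i' then 1 else 0)"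
  proof (intro ballI)
    fix i i' assume "i \<in> {1..length (psi_prefix P z)}" "i' \<in> {1..length (psi_prefix P z)}"
    then have ii': "i - 1 < P" "i' - 1 < P" "i = i' \<longleftrightarrow> i - 1 = i' - 1" by auto
    have "(psi_rest ^^ (i - 1)) z = (psi_rest ^^ (i' - 1)) z \<longleftrightarrow> i = i'"
      using inj_on_funpow_period[OF z(2,3)] ii' unfolding P_def inj_on_def by auto
    then show "cinner (word_op T (drop (i - 1) (psi_prefix P z)) z)
        (word_op T (drop (i' - 1) (psi_prefix P z)) z) = (if i = i' then 1 else 0)"
      using word_op_T_drop_psi_prefix[OF z(1) P] ii'(1,2)
        basis_orthonormal[OF psi_rest_pow_in_basis[OF z(1)] psi_rest_pow_in_basis[OF z(1)]]
      by simp
  qed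
qed

lemma cinner_tail_classes:
  assumes "C \<in> basis // tail_rel" "C' \<in> basis // tail_rel" "C \<noteq> C'" "a \<in> C" "b \<in> C'"
  shows "cinner a b = 0"
proof -
  have "a \<noteq> b" using quotient_disj[OF equiv_tail_rel assms(1,2)] assms(3-5) by blast
  moreover have "a \<in> basis" "b \<in> basis"
    using in_quotient_imp_subset[OF equiv_tail_rel] assms(1,2,4,5) by blast+
  ultimately show ?thesis using basis_orthonormal by simp
qed

definition cycle_point :: "('a \<Rightarrow> complex) set \<Rightarrow> 'a \<Rightarrow> complex" where
  "cycle_point C = (SOME z. z \<in> basis \<and> tail_rel `` {z} = C \<and> (\<exists>p>0. (psi_rest ^^ p) z = z))"

lemma cycle_point:
  assumes "C \<in> basis // tail_rel"
  shows "cycle_point C \<in> basis" "tail_rel `` {cycle_point C} = C"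
    and "\<exists>p>0. (psi_rest ^^ p) (cycle_point C) = cycle_point C"
proof -
  obtain b where b: "b \<in> basis" "C = tail_rel `` {b}" using assms by (rule quotientE)
  obtain z p where z: "(b, z) \<in> tail_rel" "0 < p" "(psi_rest ^^ p) z = z"
    using b(1) by (rule tail_class_periodic_point)
  have "tail_rel `` {z} = C" using b(2) equiv_class_eq[OF equiv_tail_rel z(1)] by simp
  then have "\<exists>z. z \<in> basis \<and> tail_rel `` {z} = C \<and> (\<exists>p>0. (psi_rest ^^ p) z = z)"
    using tail_rel_in_basis[OF z(1)] z(2,3) by blast
  from someI_ex[OF this] show "cycle_point C \<in> basis" "tail_rel `` {cycle_point C} = C"
    "\<exists>p>0. (psi_rest ^^ p) (cycle_point C) = cycle_point C"
    unfolding cycle_point_def by blast+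
qed

lemma tail_class_is_P:
  assumes "C \<in> basis // tail_rel"
  defines "J' \<equiv> psi_prefix (fun_period psi_rest (cycle_point C)) (cycle_point C)"
  shows "1 \<le> length J'" "set J' \<subseteq> {1..N}" "is_P N T T_adj J' (lclosure (lspan C))"
proof -
  note z = cycle_point[OF assms(1)]
  obtain p where p: "0 < p" "(psi_rest ^^ p) (cycle_point C) = cycle_point C"
    using z(3) by blast
  show "1 \<le> length J'" unfolding J'_def using fun_period(1)[OF p] by simp
  show "set J' \<subseteq> {1..N}" unfolding J'_def using psi_prefix_set[OF z(1)] .
  show "is_P N T T_adj J' (lclosure (lspan C))"
    unfolding J'_def using is_P_tail_class[OF z(1) p] z(2) by simp
qed

lemma decomposition: "\<exists>Js Ks. decomposes_into_cycles N T T_adj (card (basis // tail_rel)) Js Ks"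
proof -
  let ?M = "card (basis // tail_rel)"
  obtain e where e: "bij_betw e {0..<?M} (basis // tail_rel)"
    using ex_bij_betw_nat_finite[OF finite_tail_classes] by blast
  have e_class: "e m \<in> basis // tail_rel" if "m < ?M" for m
    using bij_betw_apply[OF e] that by simp
  have e_l2: "e m \<subseteq> l2" if "m < ?M" for m
    using in_quotient_imp_subset[OF equiv_tail_rel e_class[OF that]] basis_l2 by blast
  have e_orth: "cinner a b = 0" if "m < ?M" "m' < ?M" "m \<noteq> m'" "a \<in> e m" "b \<in> e m'" for m m' a b
  proof (rule cinner_tail_classes[OF e_class[OF that(1)] e_class[OF that(2)] _ that(4,5)])
    show "e m \<noteq> e m'" using bij_betw_imp_inj_on[OF e] that(1-3) unfolding inj_on_def by auto
  qed
  define Js where "Js m = psi_prefix (fun_period psi_rest (cycle_point (e m))) (cycle_point (e m))" for m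
  define Ks where "Ks m = lclosure (lspan (e m))" for m
  have "decomposes_into_cycles N T T_adj ?M Js Ks"
    unfolding decomposes_into_cycles_def
  proof (intro conjI allI impI ballI)
    fix m assume "m < ?M"
    then show "1 \<le> length (Js m)" "set (Js m) \<subseteq> {1..N}" "is_P N T T_adj (Js m) (Ks m)"
      unfolding Js_def Ks_def using tail_class_is_P[OF e_class] by simp_all
  next
    fix m m' f g assume mm': "m < ?M" "m' < ?M" "m \<noteq> m'" and fg: "f \<in> Ks m" "g \<in> Ks m'"
    show "cinner f g = 0"
    proof (rule lclosure_lspan_orthogonal[of "e m" "e m'"])
      show "e m \<subseteq> l2" "e m' \<subseteq> l2" using e_l2 mm' by auto
      show "cinner a b = 0" if "a \<in> e m" "b \<in> e m'" for a b using e_orth[OF mm' that] .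
      show "f \<in> lclosure (lspan (e m))" "g \<in> lclosure (lspan (e m'))" using fg unfolding Ks_def .
    qed
  next
    fix f :: "'a \<Rightarrow> complex" assume "f \<in> l2"
    have "(\<Union>m<?M. e m) = basis"
      using bij_betw_imp_surj_on[OF e] Union_quotient[OF equiv_tail_rel]
      by (auto simp: atLeast0LessThan)
    then have "f \<in> lclosure (lspan (\<Union>m<?M. e m))"
      using \<open>f \<in> l2\<close> l2_subset_lclosure_basis by auto
    then obtain fs where "\<And>m. m < ?M \<Longrightarrow> fs m \<in> lclosure (lspan (e m))" "f = (\<lambda>x. \<Sum>m<?M. fs m x)"
      by (rule lclosure_lspan_orthogonal_decomp) (auto intro: e_orth subsetD[OF e_l2])
    then show "\<exists>fs. (\<forall>m<?M. fs m \<in> Ks m) \<and> f = (\<lambda>x. \<Sum>m<?M. fs m x)"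
      unfolding Ks_def by blast
  qed
  then show ?thesis by blast
qed

abbreviation state :: "('a \<Rightarrow> complex) \<Rightarrow> nat list" where
  "state b \<equiv> prefix (l - 1) b"

lemma state_in_mealy_states: "b \<in> basis \<Longrightarrow> state b \<in> mealy_states N l"
  unfolding mealy_states_def by (rule prefix_in_words)

text \<open>If \<open>b\<close> starts with \<open>K @ [i]\<close>, then \<open>psi_rest b\<close> starts with \<open>tl (\<sigma>\<^sup>-\<^sup>1 (K @ [i]))\<close>,
  which is \<open>\<delta>(q\<^sub>K, a\<^sub>i)\<close>.\<close>

lemma state_psi_rest_edge:
  assumes "b \<in> basis"
  defines "i \<equiv> lead ((rest ^^ (l - 1)) b)"
  shows "(state b, (i, mealy_lambda N l \<sigma> (state b) i), state (psi_rest b)) \<in> mealy_edges N l \<sigma>"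
proof -
  have "prefix l b = state b @ [i]"
    using prefix_Suc_snoc[of "l - 1" b] l_pos unfolding i_def by simp
  have i: "i \<in> {1..N}" unfolding i_def using lead_rest(1)[OF rest_pow_in_basis[OF assms(1)]] .
  obtain y ys where yys: "\<sigma>_inv (prefix l b) = y # ys" "y \<in> {1..N}" "set ys \<subseteq> {1..N}"
    "length ys = l - 1" by (rule \<sigma>_inv_ConsE[OF prefix_in_words[OF assms(1)]])
  have "state (psi_rest b) = ys"
    using psi_rest_eq[OF assms(1)] prefix_word_op[OF yys(3) rest_pow_in_basis[OF assms(1)]] yys
    by simp
  also have "ys = mealy_delta N l \<sigma> (state b) i"
    using yys(1) \<open>prefix l b = state b @ [i]\<close> unfolding mealy_delta_def \<sigma>_inv_def by simp
  finally show ?thesis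
    unfolding mealy_edges_def using state_in_mealy_states[OF assms(1)] i by blast
qed

lemma state_psi_rest_pow_conn:
  "b \<in> basis \<Longrightarrow> (state b, state ((psi_rest ^^ n) b)) \<in> mealy_conn N l \<sigma>"
proof (induction n)
  case 0
  then show ?case
    using equiv_class_self[OF equiv_mealy_conn state_in_mealy_states] by simp
next
  case (Suc n)
  have "(psi_rest ^^ n) b \<in> basis" using Suc.prems by (rule psi_rest_pow_in_basis)
  then have "(state ((psi_rest ^^ n) b), state ((psi_rest ^^ Suc n) b)) \<in> mealy_conn N l \<sigma>"
    using mealy_edge_conn[OF state_psi_rest_edge] state_in_mealy_states psi_rest_in_basis by simp
  with Suc show ?case
    using equiv_mealy_conn unfolding equiv_def trans_def by blast
qed

lemma tail_rel_mealy_conn: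
  assumes "(b, b') \<in> tail_rel" shows "(state b, state b') \<in> mealy_conn N l \<sigma>"
proof -
  obtain n m where "b \<in> basis" "b' \<in> basis" "(psi_rest ^^ n) b = (psi_rest ^^ m) b'"
    using assms by (rule tail_relE)
  then have "(state b, state ((psi_rest ^^ n) b)) \<in> mealy_conn N l \<sigma>"
    "(state b', state ((psi_rest ^^ n) b)) \<in> mealy_conn N l \<sigma>"
    using state_psi_rest_pow_conn[of b n] state_psi_rest_pow_conn[of b' m] by simp_all
  then show ?thesis
    using equiv_mealy_conn unfolding equiv_def sym_def trans_def by blast
qed

lemma mealy_num_components_le: "mealy_num_components N l \<sigma> \<le> card (basis // tail_rel)"
proof -
  define component where "component C = mealy_conn N l \<sigma> `` (state ` C)" for C
  have "mealy_states N l // mealy_conn N l \<sigma> \<subseteq> component ` (basis // tail_rel)"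
  proof
    fix Q assume "Q \<in> mealy_states N l // mealy_conn N l \<sigma>"
    then obtain q where q: "q \<in> mealy_states N l" "Q = mealy_conn N l \<sigma> `` {q}"
      by (rule quotientE)
    define b where "b = word_op S q (cycle_vec 0)"
    have "set q \<subseteq> {1..N}" "length q = l - 1"
      using q(1) unfolding mealy_states_def by (auto simp: mem_words_iff)
    then have b: "b \<in> basis" "state b = q"
      unfolding b_def using k_pos prefix_word_op[of q "cycle_vec 0"] cycle_vec_in_basis[of 0]
        word_op_cycle_vec_in_basis[of q 0] by simp_all
    have "state ` (tail_rel `` {b}) \<subseteq> mealy_conn N l \<sigma> `` {q}"
      using tail_rel_mealy_conn b(2) by blast
    moreover have "q \<in> state ` (tail_rel `` {b})"
      using equiv_class_self[OF equiv_tail_rel b(1)] b(2) by blast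
    ultimately have "component (tail_rel `` {b}) = Q"
      unfolding component_def q(2) by (intro equiv_Image_eq_class[OF equiv_mealy_conn])
    moreover have "tail_rel `` {b} \<in> basis // tail_rel" using b(1) by (rule quotientI)
    ultimately show "Q \<in> component ` (basis // tail_rel)" by blast
  qed
  then have "card (mealy_states N l // mealy_conn N l \<sigma>) \<le> card (component ` (basis // tail_rel))"
    by (intro card_mono finite_imageI finite_tail_classes)
  also have "\<dots> \<le> card (basis // tail_rel)"
    by (rule card_image_le[OF finite_tail_classes])
  finally show ?thesis unfolding mealy_num_components_def .
qed

end

theorem proposition3p2:
  fixes N l M k :: nat and \<sigma> :: "nat list \<Rightarrow> nat list" and J :: "nat list"
    and S Sa :: "nat \<Rightarrow> ('a \<Rightarrow> complex) \<Rightarrow> ('a \<Rightarrow> complex)"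
  assumes "N \<ge> 2" and "l \<ge> 1"
    and "bij_betw \<sigma> (words N l) (words N l)"
    and "M = mealy_num_components N l \<sigma>"
    and "k \<ge> 1" and "J \<in> words N k"
    and "cuntz_rep N S Sa" and "is_P N S Sa J l2"
  shows "\<exists>M' Js Ks. M' \<ge> M \<and>
           decomposes_into_cycles N (psi_S N l \<sigma> S Sa) (psi_Sa N l \<sigma> S Sa) M' Js Ks"
proof -
  obtain \<Omega> where \<Omega>: "\<Omega> \<in> l2" "cyclic_space N S Sa \<Omega> = l2" "word_op S J \<Omega> = \<Omega>"
    "\<forall>i\<in>{1..length J}. \<forall>i'\<in>{1..length J}.
       cinner (word_op S (drop (i - 1) J) \<Omega>) (word_op S (drop (i' - 1) J) \<Omega>) = (if i = i' then 1 else 0)"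
    using assms(8) unfolding is_P_def by blast
  interpret psi_cycle_rep N S Sa J k \<Omega> l \<sigma>
    using assms \<Omega> by unfold_locales auto
  obtain Js Ks where "decomposes_into_cycles N T T_adj (card (basis // tail_rel)) Js Ks"
    using decomposition by blast
  moreover have "M \<le> card (basis // tail_rel)"
    using mealy_num_components_le assms(4) by simp
  ultimately show ?thesis by blast
qed

end
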